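(* Let $n\geq 1$, let $\pi\in S_n$ be a 321-avoiding permutation and let $A_\pi$ be the associated linear Nakayama algebra (with $n+1$ simple modules) with Jacobson radical $J$. Then $\operatorname{Ext}^1_{A_\pi}(J,J)\cong K^{\mathfrak{s}(\pi)}$ as $K$-vector spaces.
   Context: $K$ is a field. A linear Nakayama algebra with $m$ simple modules is a connected algebra $A=KQ/I$ with $Q$ the quiver $0\to1\to\cdots\to m-1$ and $I$ admissible; modules are finite-dimensional right modules, $J$ is the Jacobson radical of $A$ viewed as right module. The indecomposable projective $e_iA$ is uniserial with composition factors $S_i,\dots,S_{i+c_i-1}$, $c_i=\dim_K e_iA$, and $A$ is determined by $[c_0,\dots,c_{m-1}]$. For $m=n+1$, the Dyck path $\mathcal D_A$ of $A$ is the lattice path from $(0,0)$ to $(2n,0)$ whose vertex with first coordinate $x$ has height $h(x)=\max\{k-1: 0\le i\le n,\ 1\le k\le c_i,\ 2i+k-1=2n-x\}$; this is a bijection between isomorphism classes of such algebras and Dyck paths of semilength $n$. Billey–Jockusch–Stanley bijection: for a Dyck path $u^{a_1}d^{d_1}\cdots u^{a_\ell}d^{d_\ell}$ ($a_i,d_i\ge1$) put $A_j=a_1+\dots+a_j$, $D_j=d_1+\dots+d_j$ ($1\le j\le\ell-1$), set $\pi(D_j)=A_j+1$ and fill the remaining positions in increasing order with the remaining values of $[n]$; this is a bijection onto 321-avoiding permutations of $[n]$. $A_\pi$ is the linear Nakayama algebra whose Dyck path corresponds to $\pi$. Support size: $\mathfrak s(\pi)$ is the number of distinct simple transpositions $s_i=(i,i+1)$,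 $1\le i\le n-1$, occurring in a reduced (minimal length) expression of $\pi$ as a product of the $s_i$. *)

theory Defs
  imports Complex_Main "HOL-Library.Function_Algebras" "HOL-Combinatorics.Permutations"
begin

definition avoids_321 :: "nat \<Rightarrow> (nat \<Rightarrow> nat) \<Rightarrow> bool" where
  "avoids_321 n \<pi> \<longleftrightarrow>
     \<not> (\<exists>i j k. 1 \<le> i \<and> i < j \<and> j < k \<and> k \<le> n \<and> \<pi> i > \<pi> j \<and> \<pi> j > \<pi> k)"

definition word_perm :: "nat list \<Rightarrow> nat \<Rightarrow> nat" where
  "word_perm w = foldr (\<lambda>i f. transpose i (Suc i) \<circ> f) w id"

definition reduced_word :: "nat \<Rightarrow> (nat \<Rightarrow> nat) \<Rightarrow> nat list \<Rightarrow> bool" where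
  "reduced_word n \<pi> w \<longleftrightarrow>
     set w \<subseteq> {1..<n} \<and> word_perm w = \<pi> \<and>
     (\<forall>v. set v \<subseteq> {1..<n} \<and> word_perm v = \<pi> \<longrightarrow> length w \<le> length v)"

definition support_size :: "nat \<Rightarrow> (nat \<Rightarrow> nat) \<Rightarrow> nat" where
  "support_size n \<pi> = card (set (SOME w. reduced_word n \<pi> w))"

text \<open>Dyck words: True = up step u, False = down step d.
  valleys w = positions p such that step p-1 is d and step p is u, i.e. the
  boundaries between d^{d_j} and u^{a_{j+1}}; at valley j the number of u's
  before it is A_j and the number of d's before it is D_j.\<close>
definition valleys :: "bool list \<Rightarrow> nat set" where
  "valleys w = {p. 0 < p \<and> p < length w \<and> \<not> w ! (p - 1) \<and> w ! p}"

definition ups_before :: "bool list \<Rightarrow> nat \<Rightarrow> nat" where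
  "ups_before w p = length (filter id (take p w))"

definition downs_before :: "bool list \<Rightarrow> nat \<Rightarrow> nat" where
  "downs_before w p = length (filter Not (take p w))"

definition bjs_perm :: "nat \<Rightarrow> bool list \<Rightarrow> (nat \<Rightarrow> nat) \<Rightarrow> bool" where
  "bjs_perm n w \<pi> \<longleftrightarrow>
     \<pi> permutes {1..n} \<and>
     (\<forall>p \<in> valleys w. \<pi> (downs_before w p) = ups_before w p + 1) \<and>
     strict_mono_on ({1..n} - downs_before w ` valleys w) \<pi>"

text \<open>c = [c_0, ..., c_{m-1}] is the Kupisch series of a connected linear Nakayama
  algebra KQ/I with I admissible.\<close>
definition kupisch :: "nat list \<Rightarrow> bool" where
  "kupisch c \<longleftrightarrow> c \<noteq> [] \<and> c ! (length c - 1) = 1 \<and>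
     (\<forall>i. Suc i < length c \<longrightarrow> 2 \<le> c ! i \<and> c ! i \<le> c ! Suc i + 1)"

definition dyck_height :: "nat list \<Rightarrow> nat \<Rightarrow> nat" where
  "dyck_height c x = (let n = length c - 1 in
     Max {k - 1 | i k. i \<le> n \<and> 1 \<le> k \<and> k \<le> c ! i \<and> 2 * i + k - 1 = 2 * n - x})"

definition dyck_word :: "nat list \<Rightarrow> bool list" where
  "dyck_word c = map (\<lambda>x. dyck_height c x < dyck_height c (Suc x)) [0..<2 * (length c - 1)]"

text \<open>A right module over KQ/I is a representation: vector spaces K^(d j) at vertex j and
  linear maps a j : K^(d j) -> K^(d (j+1)) (matrices: a j r s, r < d (j+1), s < d j).\<close>

definition mcomp :: "(nat \<Rightarrow> nat \<Rightarrow> 'k::field) \<Rightarrow> (nat \<Rightarrow> nat \<Rightarrow> 'k) \<Rightarrow> nat \<Rightarrow> nat \<Rightarrow> nat \<Rightarrow> 'k" where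
  "mcomp G F k r s = (\<Sum>t<k. G r t * F t s)"

fun path_map :: "(nat \<Rightarrow> nat) \<Rightarrow> (nat \<Rightarrow> nat \<Rightarrow> nat \<Rightarrow> 'k::field) \<Rightarrow> nat \<Rightarrow> nat \<Rightarrow> nat \<Rightarrow> nat \<Rightarrow> 'k" where
  "path_map d a i 0 = (\<lambda>r s. if r = s then 1 else 0)"
| "path_map d a i (Suc l) = mcomp (a (i + l)) (path_map d a i l) (d (i + l))"

text \<open>The representation satisfies the relations of A: the paths of length c_i from i
  (which generate I) act as zero.\<close>
definition is_module :: "nat list \<Rightarrow> (nat \<Rightarrow> nat) \<Rightarrow> (nat \<Rightarrow> nat \<Rightarrow> nat \<Rightarrow> 'k::field) \<Rightarrow> bool" where
  "is_module c d a \<longleftrightarrow>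
     (\<forall>i < length c. i + c ! i < length c \<longrightarrow>
        (\<forall>r s. r < d (i + c ! i) \<and> s < d i \<longrightarrow> path_map d a i (c ! i) r s = 0))"

text \<open>The radical J of A_A: J = direct sum of rad(e_i A); a basis of J e_j is given by the
  paths from i to j of positive length nonzero in A, i.e. i < j < i + c_i.\<close>
definition rad_idx :: "nat list \<Rightarrow> nat \<Rightarrow> nat list" where
  "rad_idx c j = filter (\<lambda>i. j < i + c ! i) [0..<j]"

definition rad_dim :: "nat list \<Rightarrow> nat \<Rightarrow> nat" where
  "rad_dim c j = (if j < length c then length (rad_idx c j) else 0)"

definition rad_map :: "nat list \<Rightarrow> nat \<Rightarrow> nat \<Rightarrow> nat \<Rightarrow> 'k::field" where
  "rad_map c j r s = (if Suc j < length c \<and> r < rad_dim c (Suc j) \<and> s < rad_dim c j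
       \<and> rad_idx c (Suc j) ! r = rad_idx c j ! s then 1 else 0)"

type_synonym 'k cochain = "nat \<Rightarrow> nat \<Rightarrow> nat \<Rightarrow> 'k"

definition cscale :: "'k::field \<Rightarrow> 'k cochain \<Rightarrow> 'k cochain" where
  "cscale x f = (\<lambda>j r s. x * f j r s)"

text \<open>1-cochains: families f_j : M_j -> N_{j+1} over the arrows j -> j+1.\<close>
definition cochains1 :: "nat \<Rightarrow> (nat \<Rightarrow> nat) \<Rightarrow> (nat \<Rightarrow> nat) \<Rightarrow> 'k::field cochain set" where
  "cochains1 m dM dN = {f. \<forall>j r s. f j r s \<noteq> 0 \<longrightarrow> Suc j < m \<and> r < dN (Suc j) \<and> s < dM j}"

text \<open>The middle term E_f of the extension 0 -> N -> E_f -> M -> 0 of representations with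
  E_j = N_j (+) M_j and arrow maps [[aN_j, f_j], [0, aM_j]].\<close>
definition ext_dim :: "(nat \<Rightarrow> nat) \<Rightarrow> (nat \<Rightarrow> nat) \<Rightarrow> nat \<Rightarrow> nat" where
  "ext_dim dM dN j = dN j + dM j"

definition ext_map :: "(nat \<Rightarrow> nat) \<Rightarrow> (nat \<Rightarrow> nat \<Rightarrow> nat \<Rightarrow> 'k::field) \<Rightarrow>
     (nat \<Rightarrow> nat) \<Rightarrow> (nat \<Rightarrow> nat \<Rightarrow> nat \<Rightarrow> 'k) \<Rightarrow> 'k cochain \<Rightarrow> nat \<Rightarrow> nat \<Rightarrow> nat \<Rightarrow> 'k" where
  "ext_map dM aM dN aN f j r s =
     (if r < dN (Suc j) then (if s < dN j then aN j r s else f j r (s - dN j))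
      else (if s < dN j then 0 else aM j (r - dN (Suc j)) (s - dN j)))"

definition ext_cocycles :: "nat list \<Rightarrow> (nat \<Rightarrow> nat) \<Rightarrow> (nat \<Rightarrow> nat \<Rightarrow> nat \<Rightarrow> 'k::field) \<Rightarrow>
     (nat \<Rightarrow> nat) \<Rightarrow> (nat \<Rightarrow> nat \<Rightarrow> nat \<Rightarrow> 'k) \<Rightarrow> 'k cochain set" where
  "ext_cocycles c dM aM dN aN =
     {f \<in> cochains1 (length c) dM dN. is_module c (ext_dim dM dN) (ext_map dM aM dN aN f)}"

definition ext_coboundaries :: "nat list \<Rightarrow> (nat \<Rightarrow> nat) \<Rightarrow> (nat \<Rightarrow> nat \<Rightarrow> nat \<Rightarrow> 'k::field) \<Rightarrow>
     (nat \<Rightarrow> nat) \<Rightarrow> (nat \<Rightarrow> nat \<Rightarrow> nat \<Rightarrow> 'k) \<Rightarrow> 'k cochain set" where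
  "ext_coboundaries c dM aM dN aN =
     {f. \<exists>g :: 'k cochain. (\<forall>j r s. g j r s \<noteq> 0 \<longrightarrow> j < length c \<and> r < dN j \<and> s < dM j) \<and>
        f = (\<lambda>j r s. if Suc j < length c \<and> r < dN (Suc j) \<and> s < dM j
                     then mcomp (aN j) (g j) (dN j) r s - mcomp (g (Suc j)) (aM j) (dM (Suc j)) r s
                     else 0)}"

definition ext1_dim :: "nat list \<Rightarrow> (nat \<Rightarrow> nat) \<Rightarrow> (nat \<Rightarrow> nat \<Rightarrow> nat \<Rightarrow> 'k::field) \<Rightarrow>
     (nat \<Rightarrow> nat) \<Rightarrow> (nat \<Rightarrow> nat \<Rightarrow> nat \<Rightarrow> 'k) \<Rightarrow> nat" where
  "ext1_dim c dM aM dN aN =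
     vector_space.dim cscale (ext_cocycles c dM aM dN aN)
     - vector_space.dim cscale (ext_coboundaries c dM aM dN aN)"

end

theory Submission
  imports Defs
begin

text \<open>
  Write e(i) = i + c_i, so that e_iA has composition factors S_i, ..., S_(e(i) - 1), and
  J e_j has a basis indexed by the i with i < j < e(i). A class in Ext^1(J, J) is
  represented by maps f_t : J e_t \<rightarrow> J e_(t+1) along the arrows, and the middle term of
  the extension satisfies the relations of A iff the chain sums
  S_f(i', i) = \<Sum> (i' \<le> t < e(i)) f_t(i', i) vanish for all pairs with i < k < e(i) and
  i' < e(k) < e(i') for some vertex k. Chain sums of coboundaries telescope to 0, and a
  cocycle all of whose chain sums vanish has an explicit primitive. The pairs with
  e(i+1) = e(i') are exactly those not constrained by any relation, so their chain sums
  form a basis of the dual of Ext^1; their number is the number of vertices j having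
  some i < j < e(i) with c_i \<le> c_(i+1).

  On the other side, the letters of every reduced word of \<pi> are the i with
  \<pi>{1..i} \<noteq> {1..i}, and for the Billey--Jockusch--Stanley permutation of the Dyck path
  these are the n - j for the vertices j above: the valleys of the path sit exactly at
  the ascents c_i \<le> c_(i+1) of the Kupisch series.
\<close>

section \<open>Reduced words and the support of a permutation\<close>

definition inversion_set :: "nat \<Rightarrow> (nat \<Rightarrow> nat) \<Rightarrow> (nat \<times> nat) set" where
  "inversion_set n \<sigma> = {(a, b). a \<in> {1..n} \<and> b \<in> {1..n} \<and> a < b \<and> \<sigma> b < \<sigma> a}"

definition inversion_number :: "nat \<Rightarrow> (nat \<Rightarrow> nat) \<Rightarrow> nat" where
  "inversion_number n \<sigma> = card (inversion_set n \<sigma>)"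

lemma finite_inversion_set: "finite (inversion_set n \<sigma>)"
  by (rule finite_subset[of _ "{1..n} \<times> {1..n}"]) (auto simp: inversion_set_def)

lemma inversion_set_id: "inversion_set n id = {}" "inversion_set n (\<lambda>x. x) = {}"
  by (auto simp: inversion_set_def)

lemma inversion_number_id [simp]: "inversion_number n id = 0" "inversion_number n (\<lambda>x. x) = 0"
  by (simp_all add: inversion_number_def inversion_set_id)

lemma word_perm_Nil [simp]: "word_perm [] = id"
  by (simp add: word_perm_def)

lemma word_perm_Cons [simp]: "word_perm (j # w) = transpose j (Suc j) \<circ> word_perm w"
  by (simp add: word_perm_def)

lemma transpose_Suc_permutes: "1 \<le> j \<Longrightarrow> j < n \<Longrightarrow> transpose j (Suc j) permutes {1..n}"
  by (intro permutes_swap_id) auto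

lemma word_perm_permutes: "set w \<subseteq> {1..<n} \<Longrightarrow> word_perm w permutes {1..n}"
proof (induction w)
  case (Cons j w)
  then show ?case
    unfolding word_perm_Cons by (intro permutes_compose transpose_Suc_permutes) auto
qed simp

lemma inversion_number_transpose_comp_ascent:
  assumes \<sigma>: "\<sigma> permutes {1..n}" and j: "1 \<le> j" "j < n"
    and asc: "inv \<sigma> j < inv \<sigma> (Suc j)"
  shows "inversion_number n (transpose j (Suc j) \<circ> \<sigma>) = Suc (inversion_number n \<sigma>)"
proof -
  define p q where "p = inv \<sigma> j" and "q = inv \<sigma> (Suc j)"
  have p: "\<sigma> p = j" and q: "\<sigma> q = Suc j"
    using permutes_inverses[OF \<sigma>] by (auto simp: p_def q_def)
  have pe: "\<sigma> x = j \<longleftrightarrow> x = p" and qe: "\<sigma> x = Suc j \<longleftrightarrow> x = q" for x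
    using permutes_inj[OF \<sigma>] p q by (metis inj_eq)+
  have pq: "p < q" using asc by (simp add: p_def q_def)
  have "p \<in> {1..n}" "q \<in> {1..n}"
    using permutes_in_image[OF \<sigma>, of p] permutes_in_image[OF \<sigma>, of q] p q j by auto
  have "inversion_set n (transpose j (Suc j) \<circ> \<sigma>) = insert (p, q) (inversion_set n \<sigma>)"
  proof (rule set_eqI, clarify)
    fix a b
    show "(a, b) \<in> inversion_set n (transpose j (Suc j) \<circ> \<sigma>) \<longleftrightarrow>
        (a, b) \<in> insert (p, q) (inversion_set n \<sigma>)"
      using pe[of a] pe[of b] qe[of a] qe[of b] \<open>p \<in> {1..n}\<close> \<open>q \<in> {1..n}\<close> pq
      by (auto simp: inversion_set_def transpose_def)
  qed
  moreover have "(p, q) \<notin> inversion_set n \<sigma>"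
    using p q by (auto simp: inversion_set_def)
  ultimately show ?thesis
    by (simp add: inversion_number_def finite_inversion_set)
qed

lemma inversion_number_transpose_comp_descent:
  assumes \<sigma>: "\<sigma> permutes {1..n}" and j: "1 \<le> j" "j < n"
    and desc: "\<not> inv \<sigma> j < inv \<sigma> (Suc j)"
  shows "inversion_number n \<sigma> = Suc (inversion_number n (transpose j (Suc j) \<circ> \<sigma>))"
proof -
  let ?s = "transpose j (Suc j)"
  have \<sigma>': "?s \<circ> \<sigma> permutes {1..n}"
    using permutes_compose[OF \<sigma> transpose_Suc_permutes[OF j]] .
  have "inv \<sigma> j \<noteq> inv \<sigma> (Suc j)"
    using inj_eq[OF permutes_inj[OF permutes_inv[OF \<sigma>]]] by simp
  moreover have "inv (?s \<circ> \<sigma>) = inv \<sigma> \<circ> ?s"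
    using permutes_bij[OF \<sigma>] by (simp add: o_inv_distrib)
  ultimately have "inv (?s \<circ> \<sigma>) j < inv (?s \<circ> \<sigma>) (Suc j)"
    using desc by simp
  moreover have "?s \<circ> (?s \<circ> \<sigma>) = \<sigma>"
    by (metis comp_assoc transpose_comp_involutory id_comp)
  ultimately show ?thesis
    using inversion_number_transpose_comp_ascent[OF \<sigma>' j] by metis
qed

lemma inversion_number_word_perm_le:
  "set w \<subseteq> {1..<n} \<Longrightarrow> inversion_number n (word_perm w) \<le> length w"
proof (induction w)
  case (Cons j w)
  then have j: "1 \<le> j" "j < n" by auto
  have \<sigma>: "word_perm w permutes {1..n}"
    using Cons.prems by (intro word_perm_permutes) auto
  have "inversion_number n (transpose j (Suc j) \<circ> word_perm w) \<le> Suc (inversion_number n (word_perm w))"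
    using inversion_number_transpose_comp_ascent[OF \<sigma> j]
      inversion_number_transpose_comp_descent[OF \<sigma> j] by (cases "inv (word_perm w) j < inv (word_perm w) (Suc j)") auto
  moreover have "inversion_number n (word_perm w) \<le> length w"
    using Cons by auto
  ultimately show ?case
    unfolding word_perm_Cons length_Cons by linarith
qed simp

lemma permutes_ascending_eq_id:
  assumes \<tau>: "\<tau> permutes {1..n}" and asc: "\<And>j. 1 \<le> j \<Longrightarrow> j < n \<Longrightarrow> \<tau> j < \<tau> (Suc j)"
  shows "\<tau> = id"
proof
  fix x
  have ge: "k \<le> \<tau> k" if "1 \<le> k" "k \<le> n" for k
    using that
  proof (induction k)
    case (Suc k)
    show ?case
    proof (cases "k = 0")
      case True
      then show ?thesis using permutes_in_image[OF \<tau>, of 1] Suc by auto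
    next
      case False
      then show ?thesis using Suc asc[of k] by auto
    qed
  qed simp
  have le: "\<tau> (n - d) \<le> n - d" if "d < n" for d
    using that
  proof (induction d)
    case 0
    then show ?case using permutes_in_image[OF \<tau>, of n] by auto
  next
    case (Suc d)
    then have "\<tau> (n - Suc d) < \<tau> (Suc (n - Suc d))" by (intro asc) auto
    moreover have "Suc (n - Suc d) = n - d" using Suc by auto
    ultimately show ?case using Suc by auto
  qed
  show "\<tau> x = id x"
  proof (cases "x \<in> {1..n}")
    case True
    then show ?thesis using ge[of x] le[of "n - x"] by auto
  qed (simp add: permutes_not_in[OF \<tau>])
qed

lemma permutes_descent_exists:
  assumes \<sigma>: "\<sigma> permutes {1..n}" and "\<sigma> \<noteq> id"
  obtains j where "1 \<le> j" "j < n" "\<not> inv \<sigma> j < inv \<sigma> (Suc j)"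
proof -
  have "inv \<sigma> \<noteq> id"
  proof
    assume "inv \<sigma> = id"
    then have "\<sigma> = inv id" using permutes_inv_inv[OF \<sigma>] by simp
    with \<open>\<sigma> \<noteq> id\<close> show False by simp
  qed
  then show ?thesis
    using permutes_ascending_eq_id[OF permutes_inv[OF \<sigma>]] that by blast
qed

lemma word_perm_of_inversion_number:
  "\<sigma> permutes {1..n} \<Longrightarrow>
     \<exists>w. set w \<subseteq> {1..<n} \<and> word_perm w = \<sigma> \<and> length w = inversion_number n \<sigma>"
proof (induction "inversion_number n \<sigma>" arbitrary: \<sigma>)
  case 0
  have "\<sigma> = id"
  proof (rule ccontr)
    assume "\<sigma> \<noteq> id"
    then obtain j where "1 \<le> j" "j < n" "\<not> inv \<sigma> j < inv \<sigma> (Suc j)"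
      using permutes_descent_exists[OF "0.prems"] by blast
    from inversion_number_transpose_comp_descent[OF "0.prems" this] "0.hyps" show False
      by simp
  qed
  then show ?case by (intro exI[of _ "[]"]) auto
next
  case (Suc k)
  then have "\<sigma> \<noteq> id" by auto
  then obtain j where j: "1 \<le> j" "j < n" "\<not> inv \<sigma> j < inv \<sigma> (Suc j)"
    using permutes_descent_exists[OF Suc.prems] by blast
  let ?s = "transpose j (Suc j)"
  have \<sigma>': "?s \<circ> \<sigma> permutes {1..n}"
    using permutes_compose[OF Suc.prems transpose_Suc_permutes[OF j(1,2)]] .
  have count: "inversion_number n \<sigma> = Suc (inversion_number n (?s \<circ> \<sigma>))"
    using inversion_number_transpose_comp_descent[OF Suc.prems j] .
  obtain w where w: "set w \<subseteq> {1..<n}" "word_perm w = ?s \<circ> \<sigma>"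
    "length w = inversion_number n (?s \<circ> \<sigma>)"
    using Suc.hyps(1)[OF _ \<sigma>'] Suc.hyps(2) count by auto
  have "word_perm (j # w) = \<sigma>"
    using w(2) by (simp add: comp_assoc[symmetric])
  then show ?case
    using w j count by (intro exI[of _ "j # w"]) auto
qed

lemma reduced_word_length:
  assumes "\<pi> permutes {1..n}" and "reduced_word n \<pi> w"
  shows "length w = inversion_number n \<pi>"
proof -
  obtain w0 where "set w0 \<subseteq> {1..<n}" "word_perm w0 = \<pi>" "length w0 = inversion_number n \<pi>"
    using word_perm_of_inversion_number[OF assms(1)] by blast
  then have "length w \<le> inversion_number n \<pi>"
    using assms(2) unfolding reduced_word_def by metis
  moreover have "inversion_number n \<pi> \<le> length w"
    using assms(2) inversion_number_word_perm_le[of w n] unfolding reduced_word_def by blast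
  ultimately show ?thesis by simp
qed

lemma word_perm_image_initial:
  "set w \<subseteq> {1..<n} \<Longrightarrow> i \<notin> set w \<Longrightarrow> word_perm w ` {1..i} = {1..i}"
proof (induction w)
  case (Cons j w)
  have "transpose j (Suc j) ` {1..i} = {1..i}"
    using Cons.prems by (auto simp: transpose_def image_iff)
  moreover have "word_perm w ` {1..i} = {1..i}" using Cons by auto
  ultimately show ?case unfolding word_perm_Cons image_comp[symmetric] by simp
qed simp

lemma less_transpose_Suc_iff: "j \<noteq> i \<Longrightarrow> i < transpose j (Suc j) x \<longleftrightarrow> i < x"
  by (auto simp: transpose_def)

lemma transpose_comp_moves_initial:
  assumes \<sigma>: "\<sigma> permutes {1..n}" and i: "1 \<le> i" "i < n"
    and asc: "inv \<sigma> i < inv \<sigma> (Suc i)"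
  shows "\<exists>a\<in>{1..i}. i < (transpose i (Suc i) \<circ> \<sigma>) a"
proof (cases "\<exists>a\<in>{1..i}. i < \<sigma> a")
  case True
  then obtain a where a: "a \<in> {1..i}" "i < \<sigma> a" by blast
  show ?thesis
  proof (cases "\<sigma> a = Suc i")
    case True
    define p where "p = inv \<sigma> i"
    have "(transpose i (Suc i) \<circ> \<sigma>) p = Suc i"
      using permutes_inverses(1)[OF \<sigma>] unfolding p_def by simp
    moreover have "p \<in> {1..n}"
      using permutes_in_image[OF permutes_inv[OF \<sigma>]] i unfolding p_def by auto
    moreover have "p < a"
      using asc permutes_inverses(2)[OF \<sigma>, of a] True unfolding p_def by simp
    ultimately show ?thesis
      using a by (intro bexI[of _ p]) auto
  next
    case False
    then show ?thesis using a by (intro bexI[of _ a]) (auto simp: transpose_def)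
  qed
next
  case False
  have "\<sigma> ` {1..i} \<subseteq> {1..i}"
  proof (rule image_subsetI)
    fix x
    assume x: "x \<in> {1..i}"
    then have "\<sigma> x \<in> {1..n}" using permutes_in_image[OF \<sigma>] i by simp
    moreover have "\<not> i < \<sigma> x" using False x by blast
    ultimately show "\<sigma> x \<in> {1..i}" by simp
  qed
  then have "\<sigma> ` {1..i} = {1..i}"
    by (intro endo_inj_surj) (auto intro: inj_on_subset[OF permutes_inj[OF \<sigma>]])
  moreover have "i \<in> {1..i}" using i by simp
  ultimately obtain x where "x \<in> {1..i}" "\<sigma> x = i"
    by (metis imageE)
  then show ?thesis by (intro bexI[of _ x]) auto
qed

lemma reduced_word_moves_initial:
  assumes "set w \<subseteq> {1..<n}" "inversion_number n (word_perm w) = length w" "i \<in> set w"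
  shows "\<exists>a\<in>{1..i}. i < word_perm w a"
  using assms
proof (induction w)
  case (Cons j w)
  let ?\<sigma> = "word_perm w"
  have j: "1 \<le> j" "j < n" using Cons.prems by auto
  have \<sigma>: "?\<sigma> permutes {1..n}"
    using Cons.prems by (intro word_perm_permutes) auto
  have len: "inversion_number n (transpose j (Suc j) \<circ> ?\<sigma>) = Suc (length w)"
    using Cons.prems(2) by (simp only: word_perm_Cons length_Cons)
  have le: "inversion_number n ?\<sigma> \<le> length w"
    using Cons.prems by (intro inversion_number_word_perm_le) auto
  have asc: "inv ?\<sigma> j < inv ?\<sigma> (Suc j)"
  proof (rule ccontr)
    assume "\<not> inv ?\<sigma> j < inv ?\<sigma> (Suc j)"
    from inversion_number_transpose_comp_descent[OF \<sigma> j this] len le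
    show False by simp
  qed
  then have red: "inversion_number n ?\<sigma> = length w"
    using inversion_number_transpose_comp_ascent[OF \<sigma> j] len by simp
  show ?case
  proof (cases "j = i")
    case True
    then show ?thesis using transpose_comp_moves_initial[OF \<sigma> j asc] by simp
  next
    case False
    then have "\<exists>a\<in>{1..i}. i < ?\<sigma> a"
      using Cons.IH red Cons.prems by auto
    then show ?thesis using less_transpose_Suc_iff[OF False] by simp
  qed
qed simp

lemma set_reduced_word:
  assumes "\<pi> permutes {1..n}" and red: "reduced_word n \<pi> w"
  shows "set w = {i \<in> {1..<n}. \<pi> ` {1..i} \<noteq> {1..i}}"
proof (intro set_eqI iffI)
  have w: "set w \<subseteq> {1..<n}" "word_perm w = \<pi>"
    using red by (auto simp: reduced_word_def)
  fix i
  assume "i \<in> set w"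
  moreover have "inversion_number n (word_perm w) = length w"
    using w(2) reduced_word_length[OF assms] by simp
  ultimately obtain a where "a \<in> {1..i}" "i < \<pi> a"
    using reduced_word_moves_initial[OF w(1)] w(2) by blast
  then have "\<pi> a \<in> \<pi> ` {1..i}" "\<pi> a \<notin> {1..i}" by auto
  then have "\<pi> ` {1..i} \<noteq> {1..i}" by blast
  then show "i \<in> {i \<in> {1..<n}. \<pi> ` {1..i} \<noteq> {1..i}}"
    using \<open>i \<in> set w\<close> w(1) by auto
next
  fix i
  assume "i \<in> {i \<in> {1..<n}. \<pi> ` {1..i} \<noteq> {1..i}}"
  then show "i \<in> set w"
    using word_perm_image_initial[of w n i] red by (auto simp: reduced_word_def)
qed

lemma support_size_eq_card:
  assumes \<pi>: "\<pi> permutes {1..n}"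
  shows "support_size n \<pi> = card {i \<in> {1..<n}. \<pi> ` {1..i} \<noteq> {1..i}}"
proof -
  obtain w where w: "set w \<subseteq> {1..<n}" "word_perm w = \<pi>" "length w = inversion_number n \<pi>"
    using word_perm_of_inversion_number[OF \<pi>] by blast
  then have "reduced_word n \<pi> w"
    using inversion_number_word_perm_le by (fastforce simp: reduced_word_def)
  then have "reduced_word n \<pi> (SOME w. reduced_word n \<pi> w)" by (rule someI)
  then show ?thesis
    unfolding support_size_def using set_reduced_word[OF \<pi>] by simp
qed

section \<open>Counting dimensions with a dual family\<close>

context vector_space
begin

lemma dual_vanishes_on_span:
  assumes add: "\<And>x y. \<phi> (x + y) = \<phi> x + \<phi> y" and scale: "\<And>a x. \<phi> (a *s x) = a * \<phi> x"
    and "x \<in> span S" and "\<And>y. y \<in> S \<Longrightarrow> \<phi> y = 0"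
  shows "\<phi> x = 0"
  using assms(3)
proof (induction rule: span_induct_alt)
  case base
  then show ?case using scale[of 0 0] by simp
qed (simp add: add scale assms(4))

lemma independent_Un_image_dual:
  fixes Q :: "'q set" and w :: "'q \<Rightarrow> 'b" and \<sigma> :: "'q \<Rightarrow> 'b \<Rightarrow> 'a"
  assumes indep: "independent b" and fin: "finite b" "finite Q"
    and add: "\<And>q x y. q \<in> Q \<Longrightarrow> \<sigma> q (x + y) = \<sigma> q x + \<sigma> q y"
    and scale: "\<And>q a x. q \<in> Q \<Longrightarrow> \<sigma> q (a *s x) = a * \<sigma> q x"
    and vanish: "\<And>q x. q \<in> Q \<Longrightarrow> x \<in> b \<Longrightarrow> \<sigma> q x = 0"
    and dual: "\<And>q q'. q \<in> Q \<Longrightarrow> q' \<in> Q \<Longrightarrow> \<sigma> q (w q') = (if q = q' then 1 else 0)"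
  shows "independent (b \<union> w ` Q) \<and> card (b \<union> w ` Q) = card b + card Q"
proof -
  have "independent (b \<union> w ` Q') \<and> card (b \<union> w ` Q') = card b + card Q'" if "Q' \<subseteq> Q" for Q'
    using finite_subset[OF that fin(2)] that
  proof (induction Q' rule: finite_induct)
    case (insert q Q')
    then have q: "q \<in> Q" and IH: "independent (b \<union> w ` Q')" "card (b \<union> w ` Q') = card b + card Q'"
      by auto
    have "\<sigma> q y = 0" if "y \<in> b \<union> w ` Q'" for y
      using that vanish[OF q] dual[OF q] insert by auto
    then have "w q \<notin> span (b \<union> w ` Q')"
      using dual_vanishes_on_span[OF add[OF q] scale[OF q]] dual[OF q q] by force
    then have "independent (insert (w q) (b \<union> w ` Q'))" and "w q \<notin> b \<union> w ` Q'"
      using independent_insertI[OF _ IH(1)] span_base by auto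
    moreover have "b \<union> w ` insert q Q' = insert (w q) (b \<union> w ` Q')" by blast
    moreover have "finite (b \<union> w ` Q')" using fin(1) insert.hyps(1) by blast
    ultimately show ?case
      using IH(2) insert.hyps by simp
  qed (use indep in simp)
  then show ?thesis by blast
qed

lemma dim_eq_dim_add_card_dual:
  fixes Q :: "'q set" and w :: "'q \<Rightarrow> 'b" and \<sigma> :: "'q \<Rightarrow> 'b \<Rightarrow> 'a"
  assumes BZ: "B \<subseteq> Z" and ZT: "Z \<subseteq> span T" and "finite T" "finite Q"
    and wZ: "w ` Q \<subseteq> Z" and Z_span: "Z \<subseteq> span (B \<union> w ` Q)"
    and add: "\<And>q x y. q \<in> Q \<Longrightarrow> \<sigma> q (x + y) = \<sigma> q x + \<sigma> q y"
    and scale: "\<And>q a x. q \<in> Q \<Longrightarrow> \<sigma> q (a *s x) = a * \<sigma> q x"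
    and vanish: "\<And>q x. q \<in> Q \<Longrightarrow> x \<in> B \<Longrightarrow> \<sigma> q x = 0"
    and dual: "\<And>q q'. q \<in> Q \<Longrightarrow> q' \<in> Q \<Longrightarrow> \<sigma> q (w q') = (if q = q' then 1 else 0)"
  shows "dim Z = dim B + card Q"
proof -
  obtain b where b: "b \<subseteq> B" "independent b" "B \<subseteq> span b" "card b = dim B"
    using basis_exists[of B] by blast
  have "finite b"
    using independent_span_bound[OF \<open>finite T\<close> b(2)] b(1) BZ ZT by auto
  then have indep: "independent (b \<union> w ` Q) \<and> card (b \<union> w ` Q) = card b + card Q"
    using independent_Un_image_dual[OF b(2) _ \<open>finite Q\<close> add scale _ dual] vanish b(1)
    by blast
  have "B \<union> w ` Q \<subseteq> span (b \<union> w ` Q)"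
    using b(3) span_mono[of b "b \<union> w ` Q"] span_superset by blast
  then have "Z \<subseteq> span (b \<union> w ` Q)"
    using Z_span span_minimal[OF _ subspace_span] by blast
  then show ?thesis
    using dim_unique[of "b \<union> w ` Q" Z] b BZ wZ indep by auto
qed

end

section \<open>Extensions of the radical by itself\<close>

lemma sum_fun_apply: "sum F A x = (\<Sum>a\<in>A. F a x)"
  by (induction A rule: infinite_finite_induct) auto

lemma sum_lessThan_add:
  "(\<Sum>t<a + b. g t) = (\<Sum>t<a. g t) + (\<Sum>t<b. g (a + t :: nat))"
  by (induction b) (auto simp: add.assoc)

fun ext_path_corner :: "(nat \<Rightarrow> nat) \<Rightarrow> (nat \<Rightarrow> nat \<Rightarrow> nat \<Rightarrow> 'k::field) \<Rightarrow>
    (nat \<Rightarrow> nat) \<Rightarrow> (nat \<Rightarrow> nat \<Rightarrow> nat \<Rightarrow> 'k) \<Rightarrow> 'k cochain \<Rightarrow> nat \<Rightarrow> nat \<Rightarrow> nat \<Rightarrow> nat \<Rightarrow> 'k"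
  where
  "ext_path_corner dM aM dN aN f k 0 = (\<lambda>r s. 0)"
| "ext_path_corner dM aM dN aN f k (Suc l) = (\<lambda>r s.
      mcomp (aN (k + l)) (ext_path_corner dM aM dN aN f k l) (dN (k + l)) r s
    + mcomp (f (k + l)) (path_map dM aM k l) (dM (k + l)) r s)"

lemma path_map_ext_map:
  fixes aM aN :: "nat \<Rightarrow> nat \<Rightarrow> nat \<Rightarrow> 'k::field"
  assumes "r < ext_dim dM dN (k + l)" "s < ext_dim dM dN k"
  shows "path_map (ext_dim dM dN) (ext_map dM aM dN aN f) k l r s =
    (if r < dN (k + l)
     then if s < dN k then path_map dN aN k l r s else ext_path_corner dM aM dN aN f k l r (s - dN k)
     else if s < dN k then 0 else path_map dM aM k l (r - dN (k + l)) (s - dN k))"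
  using assms
proof (induction l arbitrary: r)
  case 0
  then show ?case by (auto simp: ext_dim_def)
next
  case (Suc l)
  let ?E = "path_map (ext_dim dM dN) (ext_map dM aM dN aN f) k l"
  let ?A = "ext_map dM aM dN aN f (k + l)"
  let ?N = "dN (k + l)" and ?M = "dM (k + l)"
  have E_top: "?E t s = (if s < dN k then path_map dN aN k l t s
      else ext_path_corner dM aM dN aN f k l t (s - dN k))" if "t < ?N" for t
  proof -
    have "t < ext_dim dM dN (k + l)" using that by (simp add: ext_dim_def)
    from Suc.IH[OF this Suc.prems(2)] show ?thesis using that by simp
  qed
  have E_bottom: "?E (?N + t) s = (if s < dN k then 0 else path_map dM aM k l t (s - dN k))"
    if "t < ?M" for t
  proof -
    have "?N + t < ext_dim dM dN (k + l)" using that by (simp add: ext_dim_def)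
    from Suc.IH[OF this Suc.prems(2)] show ?thesis by simp
  qed
  have "path_map (ext_dim dM dN) (ext_map dM aM dN aN f) k (Suc l) r s
      = (\<Sum>t<?N. ?A r t * ?E t s) + (\<Sum>t<?M. ?A r (?N + t) * ?E (?N + t) s)"
    by (simp add: mcomp_def ext_dim_def sum_lessThan_add)
  also have "\<dots> = (\<Sum>t<?N. (if r < dN (Suc (k + l)) then aN (k + l) r t else 0) *
        (if s < dN k then path_map dN aN k l t s else ext_path_corner dM aM dN aN f k l t (s - dN k)))
    + (\<Sum>t<?M. (if r < dN (Suc (k + l)) then f (k + l) r t else aM (k + l) (r - dN (Suc (k + l))) t) *
        (if s < dN k then 0 else path_map dM aM k l t (s - dN k)))"
    using E_top E_bottom by (intro arg_cong2[where f = "(+)"] sum.cong) (auto simp: ext_map_def)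
  finally show ?case
    by (cases "r < dN (Suc (k + l))"; cases "s < dN k") (simp_all add: mcomp_def)
qed

definition proj_end :: "nat list \<Rightarrow> nat \<Rightarrow> nat" where
  "proj_end c i = i + c ! i"

lemma le_proj_end: "i \<le> proj_end c i"
  by (simp add: proj_end_def)

definition rad_pos :: "nat list \<Rightarrow> nat \<Rightarrow> nat \<Rightarrow> nat" where
  "rad_pos c j i = length (filter (\<lambda>i'. j < i' + c ! i') [0..<i])"

lemma mem_rad_idx_iff: "i \<in> set (rad_idx c j) \<longleftrightarrow> i < j \<and> j < proj_end c i"
  by (auto simp: rad_idx_def proj_end_def)

lemma distinct_rad_idx: "distinct (rad_idx c j)"
  by (simp add: rad_idx_def)

lemma nth_rad_idx:
  "s < length (rad_idx c j) \<Longrightarrow> rad_idx c j ! s < j \<and> j < proj_end c (rad_idx c j ! s)"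
  using mem_rad_idx_iff nth_mem by blast

lemma nth_rad_pos:
  assumes "i < j" "j < proj_end c i"
  shows "rad_pos c j i < length (rad_idx c j) \<and> rad_idx c j ! rad_pos c j i = i"
proof -
  have "[0..<j] = [0..<i] @ i # [Suc i..<j]"
    using assms(1) by (metis less_imp_le_nat upt_add_eq_append upt_conv_Cons le_add_diff_inverse zero_le)
  then have "rad_idx c j = filter (\<lambda>i'. j < i' + c ! i') [0..<i] @ i #
      filter (\<lambda>i'. j < i' + c ! i') [Suc i..<j]"
    unfolding rad_idx_def using assms(2) by (simp add: proj_end_def)
  then show ?thesis unfolding rad_pos_def by (simp add: nth_append)
qed

lemma rad_pos_nth: "s < length (rad_idx c j) \<Longrightarrow> rad_pos c j (rad_idx c j ! s) = s"
  using nth_rad_pos[of "rad_idx c j ! s" j c] nth_rad_idx[of s c j]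
    nth_eq_iff_index_eq[OF distinct_rad_idx] by blast

lemma rad_pos_inj:
  assumes "i1 < j" "j < proj_end c i1" "i2 < j" "j < proj_end c i2" "rad_pos c j i1 = rad_pos c j i2"
  shows "i1 = i2"
  using nth_rad_pos[of i1 j c] nth_rad_pos[of i2 j c] assms by metis

lemma sum_nth_rad_idx_eq:
  "(\<Sum>t<length (rad_idx c j). if rad_idx c j ! t = i then g t else 0) =
     (if i < j \<and> j < proj_end c i then g (rad_pos c j i) else 0)"
proof (cases "i < j \<and> j < proj_end c i")
  case True
  then have "rad_idx c j ! t = i \<longleftrightarrow> t = rad_pos c j i" if "t < length (rad_idx c j)" for t
    using nth_rad_pos[of i j c] rad_pos_nth[OF that] by auto
  then have "(\<Sum>t<length (rad_idx c j). if rad_idx c j ! t = i then g t else 0) =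
        (\<Sum>t<length (rad_idx c j). if t = rad_pos c j i then g t else 0)"
    by (intro sum.cong) auto
  then show ?thesis using True nth_rad_pos[of i j c] by (simp add: sum.delta)
next
  case False
  then have "(\<Sum>t<length (rad_idx c j). if rad_idx c j ! t = i then g t else 0) = 0"
    using nth_rad_idx[of _ c j] by (intro sum.neutral) auto
  with False show ?thesis by (simp only: if_False)
qed

lemma less_rad_dim_iff: "s < rad_dim c j \<longleftrightarrow> j < length c \<and> s < length (rad_idx c j)"
  by (simp add: rad_dim_def)

lemma mcomp_rad_map_left:
  assumes "Suc j < length c" "r < rad_dim c (Suc j)"
  shows "mcomp (rad_map c j :: nat \<Rightarrow> nat \<Rightarrow> 'k::field) X (rad_dim c j) r s =
    (if rad_idx c (Suc j) ! r < j then X (rad_pos c j (rad_idx c (Suc j) ! r)) s else 0)"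
proof -
  let ?i = "rad_idx c (Suc j) ! r"
  have r: "r < length (rad_idx c (Suc j))" using assms less_rad_dim_iff by auto
  have "mcomp (rad_map c j :: nat \<Rightarrow> nat \<Rightarrow> 'k) X (rad_dim c j) r s =
      (\<Sum>t<length (rad_idx c j). if rad_idx c j ! t = ?i then X t s else 0)"
    unfolding mcomp_def using assms
    by (simp add: rad_dim_def rad_map_def eq_commute[of ?i] cong: if_cong) (rule sum.cong; simp)
  also have "\<dots> = (if ?i < j \<and> j < proj_end c ?i then X (rad_pos c j ?i) s else 0)"
    by (rule sum_nth_rad_idx_eq)
  finally show ?thesis using nth_rad_idx[OF r] by auto
qed

lemma mcomp_rad_map_right:
  assumes "Suc j < length c" "s < rad_dim c j"
  shows "mcomp X (rad_map c j :: nat \<Rightarrow> nat \<Rightarrow> 'k::field) (rad_dim c (Suc j)) r s =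
    (if Suc j < proj_end c (rad_idx c j ! s) then X r (rad_pos c (Suc j) (rad_idx c j ! s)) else 0)"
proof -
  let ?i = "rad_idx c j ! s"
  have s: "s < length (rad_idx c j)" using assms less_rad_dim_iff by auto
  have "mcomp X (rad_map c j :: nat \<Rightarrow> nat \<Rightarrow> 'k) (rad_dim c (Suc j)) r s =
      (\<Sum>t<length (rad_idx c (Suc j)). if rad_idx c (Suc j) ! t = ?i then X r t else 0)"
    unfolding mcomp_def using assms
    by (simp add: rad_dim_def rad_map_def cong: if_cong) (rule sum.cong; simp)
  also have "\<dots> = (if ?i < Suc j \<and> Suc j < proj_end c ?i then X r (rad_pos c (Suc j) ?i) else 0)"
    by (rule sum_nth_rad_idx_eq)
  finally show ?thesis using nth_rad_idx[OF s] by auto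
qed

abbreviation rad_path :: "nat list \<Rightarrow> nat \<Rightarrow> nat \<Rightarrow> nat \<Rightarrow> nat \<Rightarrow> 'k::field" where
  "rad_path c \<equiv> path_map (rad_dim c) (rad_map c)"

abbreviation rad_ext_corner :: "nat list \<Rightarrow> 'k::field cochain \<Rightarrow> nat \<Rightarrow> nat \<Rightarrow> nat \<Rightarrow> nat \<Rightarrow> 'k" where
  "rad_ext_corner c \<equiv> ext_path_corner (rad_dim c) (rad_map c) (rad_dim c) (rad_map c)"

text \<open>The coefficient of f_t : J e_t \<rightarrow> J e_(t+1) between the basis paths starting at i and at i'.\<close>

definition chain_entry :: "nat list \<Rightarrow> 'k::field cochain \<Rightarrow> nat \<Rightarrow> nat \<Rightarrow> nat \<Rightarrow> 'k" where
  "chain_entry c f t i' i = f t (rad_pos c (Suc t) i') (rad_pos c t i)"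

lemma rad_path_eq:
  assumes "k + l < length c" "r < rad_dim c (k + l)" "s < rad_dim c k"
  shows "(rad_path c k l r s :: 'k::field) = (if rad_idx c (k + l) ! r = rad_idx c k ! s then 1 else 0)"
  using assms
proof (induction l arbitrary: r)
  case 0
  then show ?case using nth_eq_iff_index_eq[OF distinct_rad_idx] by (simp add: less_rad_dim_iff)
next
  case (Suc l)
  let ?i' = "rad_idx c (Suc (k + l)) ! r"
  have r: "r < length (rad_idx c (Suc (k + l)))" using Suc.prems less_rad_dim_iff by auto
  have s: "rad_idx c k ! s < k" using Suc.prems nth_rad_idx less_rad_dim_iff by auto
  have "(rad_path c k (Suc l) r s :: 'k)
      = mcomp (rad_map c (k + l)) (rad_path c k l) (rad_dim c (k + l)) r s"
    by simp
  also have "\<dots> = (if ?i' < k + l then rad_path c k l (rad_pos c (k + l) ?i') s else 0)"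
    using Suc.prems by (simp add: mcomp_rad_map_left)
  also have "\<dots> = (if ?i' = rad_idx c k ! s then 1 else 0)"
  proof (cases "?i' < k + l")
    case True
    then have "rad_pos c (k + l) ?i' < rad_dim c (k + l)" "rad_idx c (k + l) ! rad_pos c (k + l) ?i' = ?i'"
      using nth_rad_pos[of ?i' "k + l" c] nth_rad_idx[OF r] Suc.prems by (auto simp: less_rad_dim_iff)
    then show ?thesis using Suc.IH Suc.prems True by simp
  qed (use s in auto)
  finally show ?case by simp
qed

lemma mcomp_rad_path_right:
  assumes "k + l < length c" "s < rad_dim c k"
  shows "mcomp X (rad_path c k l :: nat \<Rightarrow> nat \<Rightarrow> 'k::field) (rad_dim c (k + l)) r s =
    (if k + l < proj_end c (rad_idx c k ! s) then X r (rad_pos c (k + l) (rad_idx c k ! s)) else 0)"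
proof -
  let ?i = "rad_idx c k ! s"
  have "mcomp X (rad_path c k l :: nat \<Rightarrow> nat \<Rightarrow> 'k) (rad_dim c (k + l)) r s
      = (\<Sum>t<length (rad_idx c (k + l)). if rad_idx c (k + l) ! t = ?i then X r t else 0)"
    unfolding mcomp_def using assms
    by (intro sum.cong) (auto simp: rad_path_eq less_rad_dim_iff rad_dim_def)
  also have "\<dots> = (if ?i < k + l \<and> k + l < proj_end c ?i then X r (rad_pos c (k + l) ?i) else 0)"
    by (rule sum_nth_rad_idx_eq)
  finally show ?thesis
    using assms nth_rad_idx[of s c k] by (auto simp: less_rad_dim_iff)
qed

lemma rad_ext_corner_Suc:
  fixes f :: "'k::field cochain"
  assumes "Suc (k + l) < length c" "i' < Suc (k + l)" "Suc (k + l) < proj_end c i'"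
    and "i < k" "k < proj_end c i"
  shows "rad_ext_corner c f k (Suc l) (rad_pos c (Suc (k + l)) i') (rad_pos c k i) =
      (if i' < k + l then rad_ext_corner c f k l (rad_pos c (k + l) i') (rad_pos c k i) else 0)
    + (if k + l < proj_end c i then chain_entry c f (k + l) i' i else 0)"
proof -
  have r: "rad_pos c (Suc (k + l)) i' < rad_dim c (Suc (k + l))"
    and r': "rad_idx c (Suc (k + l)) ! rad_pos c (Suc (k + l)) i' = i'"
    using nth_rad_pos[of i' "Suc (k + l)" c] assms by (auto simp: less_rad_dim_iff)
  have s: "rad_pos c k i < rad_dim c k" and s': "rad_idx c k ! rad_pos c k i = i"
    using nth_rad_pos[of i k c] assms by (auto simp: less_rad_dim_iff)
  have "rad_ext_corner c f k (Suc l) (rad_pos c (Suc (k + l)) i') (rad_pos c k i) =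
      mcomp (rad_map c (k + l)) (rad_ext_corner c f k l) (rad_dim c (k + l))
        (rad_pos c (Suc (k + l)) i') (rad_pos c k i)
    + mcomp (f (k + l)) (rad_path c k l) (rad_dim c (k + l))
        (rad_pos c (Suc (k + l)) i') (rad_pos c k i)"
    by simp
  also have "\<dots> =
      (if i' < k + l then rad_ext_corner c f k l (rad_pos c (k + l) i') (rad_pos c k i) else 0)
    + (if k + l < proj_end c i then chain_entry c f (k + l) i' i else 0)"
    using assms unfolding mcomp_rad_map_left[OF assms(1) r] r'
    by (simp add: mcomp_rad_path_right[OF _ s] s' chain_entry_def)
  finally show ?thesis .
qed

lemma rad_ext_corner_eq:
  fixes f :: "'k::field cochain"
  assumes "k + l < length c" "i' < k + l" "k + l < proj_end c i'" "i < k" "k < proj_end c i"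
  shows "rad_ext_corner c f k l (rad_pos c (k + l) i') (rad_pos c k i) =
    (\<Sum>t | k \<le> t \<and> t < k + l \<and> i' \<le> t \<and> t < proj_end c i. chain_entry c f t i' i)"
  using assms
proof (induction l arbitrary: i')
  case (Suc l)
  let ?S = "\<lambda>l. {t. k \<le> t \<and> t < k + l \<and> i' \<le> t \<and> t < proj_end c i}"
  let ?sum = "\<lambda>l. \<Sum>t\<in>?S l. chain_entry c f t i' i"
  have "finite (?S l)" by (rule finite_subset[of _ "{..<k + l}"]) auto
  moreover have "?S (Suc l) = (if k + l < proj_end c i then insert (k + l) (?S l) else ?S l)"
    using Suc.prems by auto
  ultimately have sum_Suc: "?sum (Suc l) = ?sum l + (if k + l < proj_end c i then chain_entry c f (k + l) i' i else 0)"
    by (simp add: add.commute)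
  show ?case
  proof (cases "i' < k + l")
    case True
    then show ?thesis using rad_ext_corner_Suc[of k l c i' i f] Suc sum_Suc by simp
  next
    case False
    then have "?S l = {}" by auto
    then have "?sum l = 0" by (simp only: sum.empty)
    then show ?thesis using rad_ext_corner_Suc[of k l c i' i f] Suc.prems sum_Suc False by simp
  qed
qed (auto intro: sum.neutral)

definition chain_sum :: "nat list \<Rightarrow> 'k::field cochain \<Rightarrow> nat \<Rightarrow> nat \<Rightarrow> 'k" where
  "chain_sum c f i' i = (\<Sum>t\<in>{i'..<proj_end c i}. chain_entry c f t i' i)"

definition chain_sums_vanish :: "nat list \<Rightarrow> 'k::field cochain \<Rightarrow> bool" where
  "chain_sums_vanish c f \<longleftrightarrow> (\<forall>k i i'. proj_end c k < length c \<and> i < k \<and> k < proj_end c i \<and>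
     i' < proj_end c k \<and> proj_end c k < proj_end c i' \<longrightarrow> chain_sum c f i' i = 0)"

locale kupisch_series =
  fixes c :: "nat list" and n :: nat
  assumes kupisch: "kupisch c" and length_eq: "length c = Suc n"
begin

lemma kupisch_ge2: "i < n \<Longrightarrow> 2 \<le> c ! i"
  using kupisch length_eq by (auto simp: kupisch_def)

lemma kupisch_step: "i < n \<Longrightarrow> c ! i \<le> c ! Suc i + 1"
  using kupisch length_eq by (auto simp: kupisch_def)

lemma kupisch_last: "c ! n = 1"
  using kupisch length_eq by (auto simp: kupisch_def)

lemma proj_end_mono: "i \<le> j \<Longrightarrow> j \<le> n \<Longrightarrow> proj_end c i \<le> proj_end c j"
proof (induction j)
  case (Suc j)
  then show ?case
    using kupisch_step[of j] by (cases "i = Suc j") (auto simp: proj_end_def)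
qed simp

lemma proj_end_last: "proj_end c n = Suc n"
  using kupisch_last by (simp add: proj_end_def)

lemma proj_end_le: "i \<le> n \<Longrightarrow> proj_end c i \<le> Suc n"
  using proj_end_mono[of i n] proj_end_last by simp

lemma Suc_less_proj_end: "i < n \<Longrightarrow> Suc i < proj_end c i"
  using kupisch_ge2 by (fastforce simp: proj_end_def)

lemma relation_window:
  assumes "k \<le> n" "i < k" "k < proj_end c i" "i' < proj_end c k" "proj_end c k < proj_end c i'"
  shows "k \<le> i'" "proj_end c i \<le> proj_end c k"
  using proj_end_mono[of i k] proj_end_mono[of i' k] assms by (force, simp)

lemma rad_path_relation:
  assumes "proj_end c k < length c" "r < rad_dim c (proj_end c k)" "s < rad_dim c k"
  shows "(rad_path c k (c ! k) r s :: 'k::field) = 0"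
proof -
  have r: "r < length (rad_idx c (proj_end c k))" and s: "s < length (rad_idx c k)"
    using assms less_rad_dim_iff by auto
  have "proj_end c (rad_idx c k ! s) \<le> proj_end c k"
    using nth_rad_idx[OF s] assms length_eq le_proj_end[of k c] by (intro proj_end_mono) auto
  moreover have "proj_end c k < proj_end c (rad_idx c (proj_end c k) ! r)"
    using nth_rad_idx[OF r] by simp
  ultimately have "rad_idx c (proj_end c k) ! r \<noteq> rad_idx c k ! s" by auto
  then show ?thesis
    using rad_path_eq[of k "c ! k" c r s] assms by (simp add: proj_end_def)
qed

lemma rad_ext_corner_relation:
  fixes f :: "'k::field cochain"
  assumes "proj_end c k < length c" "i < k" "k < proj_end c i"
    and "i' < proj_end c k" "proj_end c k < proj_end c i'"
  shows "rad_ext_corner c f k (c ! k) (rad_pos c (proj_end c k) i') (rad_pos c k i) = chain_sum c f i' i"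
proof -
  have "k \<le> i'" "proj_end c i \<le> proj_end c k"
    using relation_window[of k i i'] assms length_eq le_proj_end[of k c] by auto
  then have "{t. k \<le> t \<and> t < k + c ! k \<and> i' \<le> t \<and> t < proj_end c i} = {i'..<proj_end c i}"
    by (auto simp: proj_end_def)
  then show ?thesis
    using rad_ext_corner_eq[of k "c ! k" c i' i f] assms
    by (simp add: proj_end_def chain_sum_def)
qed

lemma ext_relation_iff_corner:
  fixes f :: "'k::field cochain"
  assumes k: "proj_end c k < length c"
  shows "(\<forall>r s. r < ext_dim (rad_dim c) (rad_dim c) (proj_end c k) \<and> s < ext_dim (rad_dim c) (rad_dim c) k \<longrightarrow>
            path_map (ext_dim (rad_dim c) (rad_dim c))
              (ext_map (rad_dim c) (rad_map c) (rad_dim c) (rad_map c) f) k (c ! k) r s = 0)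
     \<longleftrightarrow> (\<forall>r s. r < rad_dim c (proj_end c k) \<and> s < rad_dim c k \<longrightarrow> rad_ext_corner c f k (c ! k) r s = 0)"
    (is "(\<forall>r s. ?in r s \<longrightarrow> ?P r s = 0) \<longleftrightarrow> _")
proof (intro iffI allI impI)
  fix r s
  assume "\<forall>r s. ?in r s \<longrightarrow> ?P r s = 0" and rs: "r < rad_dim c (proj_end c k) \<and> s < rad_dim c k"
  then have "?P r (rad_dim c k + s) = 0"
    by (simp add: ext_dim_def)
  moreover have "?P r (rad_dim c k + s) = rad_ext_corner c f k (c ! k) r s"
    using path_map_ext_map[of r "rad_dim c" "rad_dim c" k "c ! k" "rad_dim c k + s" "rad_map c" "rad_map c" f] rs
    by (simp add: ext_dim_def proj_end_def)
  ultimately show "rad_ext_corner c f k (c ! k) r s = 0" by simp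
next
  fix r s
  assume H: "\<forall>r s. r < rad_dim c (proj_end c k) \<and> s < rad_dim c k \<longrightarrow> rad_ext_corner c f k (c ! k) r s = 0"
    and rs: "?in r s"
  have "?P r s = (if r < rad_dim c (proj_end c k)
     then if s < rad_dim c k then rad_path c k (c ! k) r s else rad_ext_corner c f k (c ! k) r (s - rad_dim c k)
     else if s < rad_dim c k then 0 else rad_path c k (c ! k) (r - rad_dim c (proj_end c k)) (s - rad_dim c k))"
    using path_map_ext_map[of r "rad_dim c" "rad_dim c" k "c ! k" s "rad_map c" "rad_map c" f] rs
    by (simp add: proj_end_def)
  then show "?P r s = 0"
    using H rs rad_path_relation[OF k] by (auto simp: ext_dim_def)
qed

lemma corner_vanishes_iff_chain_sums:
  fixes f :: "'k::field cochain"
  assumes k: "proj_end c k < length c"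
  shows "(\<forall>r s. r < rad_dim c (proj_end c k) \<and> s < rad_dim c k \<longrightarrow> rad_ext_corner c f k (c ! k) r s = 0)
     \<longleftrightarrow> (\<forall>i i'. i < k \<and> k < proj_end c i \<and> i' < proj_end c k \<and> proj_end c k < proj_end c i'
            \<longrightarrow> chain_sum c f i' i = 0)"
proof (intro iffI allI impI)
  fix i i'
  assume H: "\<forall>r s. r < rad_dim c (proj_end c k) \<and> s < rad_dim c k \<longrightarrow> rad_ext_corner c f k (c ! k) r s = 0"
    and w: "i < k \<and> k < proj_end c i \<and> i' < proj_end c k \<and> proj_end c k < proj_end c i'"
  have "rad_pos c (proj_end c k) i' < rad_dim c (proj_end c k)" "rad_pos c k i < rad_dim c k"
    using nth_rad_pos[of i' "proj_end c k" c] nth_rad_pos[of i k c] w k le_proj_end[of k c]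
    by (auto simp: less_rad_dim_iff)
  then show "chain_sum c f i' i = 0"
    using H rad_ext_corner_relation[OF k] w by metis
next
  fix r s
  assume H: "\<forall>i i'. i < k \<and> k < proj_end c i \<and> i' < proj_end c k \<and> proj_end c k < proj_end c i'
            \<longrightarrow> chain_sum c f i' i = 0"
    and "r < rad_dim c (proj_end c k) \<and> s < rad_dim c k"
  then have r: "r < length (rad_idx c (proj_end c k))" and s: "s < length (rad_idx c k)"
    by (auto simp: less_rad_dim_iff)
  show "rad_ext_corner c f k (c ! k) r s = 0"
    using rad_ext_corner_relation[OF k, of "rad_idx c k ! s" "rad_idx c (proj_end c k) ! r" f]
      H nth_rad_idx[OF r] nth_rad_idx[OF s] rad_pos_nth[OF r] rad_pos_nth[OF s]
    by simp
qed

lemma is_module_ext_map_iff: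
  fixes f :: "'k::field cochain"
  shows "is_module c (ext_dim (rad_dim c) (rad_dim c)) (ext_map (rad_dim c) (rad_map c) (rad_dim c) (rad_map c) f)
    \<longleftrightarrow> chain_sums_vanish c f"
proof -
  have "is_module c (ext_dim (rad_dim c) (rad_dim c)) (ext_map (rad_dim c) (rad_map c) (rad_dim c) (rad_map c) f)
    \<longleftrightarrow> (\<forall>k. proj_end c k < length c \<longrightarrow>
      (\<forall>r s. r < ext_dim (rad_dim c) (rad_dim c) (proj_end c k) \<and> s < ext_dim (rad_dim c) (rad_dim c) k \<longrightarrow>
        path_map (ext_dim (rad_dim c) (rad_dim c))
          (ext_map (rad_dim c) (rad_map c) (rad_dim c) (rad_map c) f) k (c ! k) r s = 0))"
    unfolding is_module_def proj_end_def[symmetric] using le_less_trans[OF le_proj_end] by blast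
  also have "\<dots> \<longleftrightarrow> chain_sums_vanish c f"
    unfolding chain_sums_vanish_def
    using ext_relation_iff_corner[of _ f] corner_vanishes_iff_chain_sums[of _ f] by blast
  finally show ?thesis .
qed

end

lemma sum_ivl_telescope:
  fixes G :: "nat \<Rightarrow> 'a::ab_group_add"
  assumes "a < e"
  shows "(\<Sum>t\<in>{a..<e}. (if a < t then G t else 0) - (if Suc t < e then G (Suc t) else 0)) = 0"
proof -
  obtain e' where e: "e = Suc e'" and "a \<le> e'" using assms by (cases e) auto
  have "(\<Sum>t\<in>{a..<e}. if a < t then G t else 0) = (\<Sum>t\<in>{Suc a..<e}. G t)"
    using assms by (simp add: sum.atLeast_Suc_lessThan)
  moreover have "(\<Sum>t\<in>{a..<e}. if Suc t < e then G (Suc t) else 0) = (\<Sum>t\<in>{a..<e'}. G (Suc t))"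
    using \<open>a \<le> e'\<close> unfolding e by (simp add: sum.atLeastLessThan_Suc)
  moreover have "(\<Sum>t\<in>{a..<e'}. G (Suc t)) = (\<Sum>t\<in>{Suc a..<e}. G t)"
    unfolding e by (rule sum.shift_bounds_Suc_ivl[symmetric])
  ultimately show ?thesis by (simp add: sum_subtractf)
qed

definition coboundary :: "nat list \<Rightarrow> 'k::field cochain \<Rightarrow> 'k cochain" where
  "coboundary c g = (\<lambda>j r s. if Suc j < length c \<and> r < rad_dim c (Suc j) \<and> s < rad_dim c j
     then mcomp (rad_map c j) (g j) (rad_dim c j) r s - mcomp (g (Suc j)) (rad_map c j) (rad_dim c (Suc j)) r s
     else 0)"

lemma chain_entry_coboundary:
  fixes g :: "'k::field cochain"
  assumes "i' \<le> t" "Suc t < proj_end c i'" "i < t" "t < proj_end c i" "Suc t < length c"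
  shows "chain_entry c (coboundary c g) t i' i =
      (if i' < t then g t (rad_pos c t i') (rad_pos c t i) else 0)
    - (if Suc t < proj_end c i then g (Suc t) (rad_pos c (Suc t) i') (rad_pos c (Suc t) i) else 0)"
proof -
  have r: "rad_pos c (Suc t) i' < rad_dim c (Suc t)" "rad_idx c (Suc t) ! rad_pos c (Suc t) i' = i'"
    using nth_rad_pos[of i' "Suc t" c] assms by (auto simp: less_rad_dim_iff)
  have s: "rad_pos c t i < rad_dim c t" "rad_idx c t ! rad_pos c t i = i"
    using nth_rad_pos[of i t c] assms by (auto simp: less_rad_dim_iff)
  show ?thesis
    using mcomp_rad_map_left[OF assms(5) r(1), of "g t"] mcomp_rad_map_right[OF assms(5) s(1), of "g (Suc t)"]
      assms r s by (simp add: chain_entry_def coboundary_def)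
qed

lemma chain_sum_coboundary:
  fixes g :: "'k::field cochain"
  assumes "i < i'" "proj_end c i < proj_end c i'" "proj_end c i' \<le> length c"
  shows "chain_sum c (coboundary c g) i' i = 0"
proof (cases "i' < proj_end c i")
  case True
  let ?G = "\<lambda>t. g t (rad_pos c t i') (rad_pos c t i)"
  have "chain_sum c (coboundary c g) i' i = (\<Sum>t\<in>{i'..<proj_end c i}.
      (if i' < t then ?G t else 0) - (if Suc t < proj_end c i then ?G (Suc t) else 0))"
    unfolding chain_sum_def using assms by (intro sum.cong refl chain_entry_coboundary) auto
  also have "\<dots> = 0" by (rule sum_ivl_telescope[OF True])
  finally show ?thesis .
qed (simp add: chain_sum_def)

lemma chain_sum_add: "chain_sum c (f + g) i' i = chain_sum c f i' i + chain_sum c g i' i"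
  by (simp add: chain_sum_def chain_entry_def sum.distrib)

lemma chain_sum_diff: "chain_sum c (f - g) i' i = chain_sum c f i' i - chain_sum c g i' i"
  by (simp add: chain_sum_def chain_entry_def sum_subtractf)

lemma chain_sum_cscale: "chain_sum c (cscale x f) i' i = x * chain_sum c f i' i"
  by (simp add: chain_sum_def chain_entry_def cscale_def sum_distrib_left)

lemma chain_sum_zero [simp]: "chain_sum c 0 i' i = 0"
  by (simp add: chain_sum_def chain_entry_def)

lemma chain_sum_sum: "chain_sum c (sum F A) i' i = (\<Sum>q\<in>A. chain_sum c (F q) i' i)"
  unfolding chain_sum_def chain_entry_def sum_fun_apply by (rule sum.swap)

definition ext_pairs :: "nat list \<Rightarrow> (nat \<times> nat) set" where
  "ext_pairs c = {(i', i). i < i' \<and> i' < proj_end c i \<and> proj_end c i < proj_end c i' \<and> i' < length c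
     \<and> proj_end c (Suc i) = proj_end c i'}"

lemma finite_ext_pairs: "finite (ext_pairs c)"
  by (rule finite_subset[of _ "{..<length c} \<times> {..<length c}"]) (auto simp: ext_pairs_def)

definition ext_witness :: "nat list \<Rightarrow> nat \<times> nat \<Rightarrow> 'k::field cochain" where
  "ext_witness c q = (\<lambda>t r s. if t = proj_end c (snd q) - 1 \<and> r = rad_pos c (proj_end c (snd q)) (fst q)
     \<and> s = rad_pos c (proj_end c (snd q) - 1) (snd q) then 1 else 0)"

text \<open>For i' \<le> i the primitive is a tail sum of the chain entries, for i < i' minus a head
  sum; the two conventions agree at the end of the chain because the whole chain sum
  vanishes there.\<close>

definition chain_primitive :: "nat list \<Rightarrow> 'k::field cochain \<Rightarrow> nat \<Rightarrow> nat \<Rightarrow> nat \<Rightarrow> 'k" where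
  "chain_primitive c h t i' i =
    (if i' \<le> i then \<Sum>s | t \<le> s \<and> s < proj_end c i \<and> Suc s < proj_end c i'. chain_entry c h s i' i
     else - (\<Sum>s\<in>{i'..<t}. chain_entry c h s i' i))"

definition primitive_cochain :: "nat list \<Rightarrow> 'k::field cochain \<Rightarrow> 'k cochain" where
  "primitive_cochain c h = (\<lambda>t r s. if t < length c \<and> r < rad_dim c t \<and> s < rad_dim c t
     then chain_primitive c h t (rad_idx c t ! r) (rad_idx c t ! s) else 0)"

lemma primitive_cochain_rad_pos:
  assumes "i' < t" "t < proj_end c i'" "i < t" "t < proj_end c i" "t < length c"
  shows "primitive_cochain c h t (rad_pos c t i') (rad_pos c t i) = chain_primitive c h t i' i"
  using nth_rad_pos[of i' t c] nth_rad_pos[of i t c] assms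
  by (simp add: primitive_cochain_def less_rad_dim_iff)

lemma chain_entry_eq_primitive_diff:
  fixes h :: "'k::field cochain"
  assumes t: "i' \<le> t" "Suc t < proj_end c i'" "i < t" "t < proj_end c i"
    and vanish: "i < i' \<Longrightarrow> i' < proj_end c i \<Longrightarrow> proj_end c i < proj_end c i' \<Longrightarrow> chain_sum c h i' i = 0"
  shows "chain_entry c h t i' i = (if i' < t then chain_primitive c h t i' i else 0)
    - (if Suc t < proj_end c i then chain_primitive c h (Suc t) i' i else 0)"
proof (cases "i' \<le> i")
  case True
  let ?U = "\<lambda>x. {s. x \<le> s \<and> s < proj_end c i \<and> Suc s < proj_end c i'}"
  have "finite (?U (Suc t))" by (rule finite_subset[of _ "{..<proj_end c i}"]) auto
  moreover have "?U t = (if Suc t < proj_end c i then insert t (?U (Suc t)) else {t})"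
    using t by auto
  ultimately show ?thesis
    using True t by (simp add: chain_primitive_def)
next
  case False
  show ?thesis
  proof (cases "Suc t < proj_end c i")
    case True
    then show ?thesis using False t
      by (cases "i' < t") (simp_all add: chain_primitive_def sum.atLeastLessThan_Suc)
  next
    case False
    then have "Suc t = proj_end c i" using t by simp
    moreover have "chain_sum c h i' i = 0"
      using vanish \<open>\<not> i' \<le> i\<close> t \<open>Suc t = proj_end c i\<close> by simp
    ultimately have "(\<Sum>s\<in>{i'..<Suc t}. chain_entry c h s i' i) = 0"
      by (simp add: chain_sum_def)
    then have "(\<Sum>s\<in>{i'..<t}. chain_entry c h s i' i) + chain_entry c h t i' i = 0"
      using t by (simp add: sum.atLeastLessThan_Suc)
    then show ?thesis
      using \<open>\<not> i' \<le> i\<close> False t(1)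
      by (cases "i' < t") (simp_all add: chain_primitive_def eq_neg_iff_add_eq_0 add.commute)
  qed
qed

interpretation cochain_space: vector_space "cscale :: 'k::field \<Rightarrow> 'k cochain \<Rightarrow> 'k cochain"
  by unfold_locales (simp_all add: cscale_def fun_eq_iff algebra_simps)

lemma subspace_cochains1: "cochain_space.subspace (cochains1 m dM dN :: 'k::field cochain set)"
  unfolding cochain_space.subspace_def cochains1_def cscale_def
  by auto (metis add.left_neutral)+

definition unit_cochain :: "nat \<times> nat \<times> nat \<Rightarrow> 'k::field cochain" where
  "unit_cochain x = (\<lambda>t r s. if (t, r, s) = x then 1 else 0)"

definition cochain_box :: "nat \<Rightarrow> (nat \<Rightarrow> nat) \<Rightarrow> (nat \<Rightarrow> nat) \<Rightarrow> (nat \<times> nat \<times> nat) set" where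
  "cochain_box m dM dN = {(t, r, s). Suc t < m \<and> r < dN (Suc t) \<and> s < dM t}"

lemma finite_cochain_box: "finite (cochain_box m dM dN)"
proof -
  have "cochain_box m dM dN = (SIGMA t:{..<m}. {..<dN (Suc t)} \<times> {..<dM t}) \<inter> {(t, _). Suc t < m}"
    by (auto simp: cochain_box_def)
  then show ?thesis by auto
qed

lemma cochains1_subset_span:
  "(cochains1 m dM dN :: 'k::field cochain set) \<subseteq> cochain_space.span (unit_cochain ` cochain_box m dM dN)"
proof
  fix f :: "'k cochain"
  assume f: "f \<in> cochains1 m dM dN"
  have "f = (\<Sum>x\<in>cochain_box m dM dN. cscale (f (fst x) (fst (snd x)) (snd (snd x))) (unit_cochain x))"
  proof (intro ext)
    fix t r s
    have "(\<Sum>x\<in>cochain_box m dM dN. cscale (f (fst x) (fst (snd x)) (snd (snd x))) (unit_cochain x)) t r s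
        = (\<Sum>x\<in>cochain_box m dM dN. if x = (t, r, s) then f t r s else 0)"
      unfolding sum_fun_apply by (intro sum.cong) (auto simp: cscale_def unit_cochain_def)
    also have "\<dots> = f t r s"
      using f finite_cochain_box by (auto simp: sum.delta' cochain_box_def cochains1_def)
    finally show "f t r s = (\<Sum>x\<in>cochain_box m dM dN.
        cscale (f (fst x) (fst (snd x)) (snd (snd x))) (unit_cochain x)) t r s" ..
  qed
  also have "\<dots> \<in> cochain_space.span (unit_cochain ` cochain_box m dM dN)"
    by (intro cochain_space.span_sum cochain_space.span_scale cochain_space.span_base) auto
  finally show "f \<in> cochain_space.span (unit_cochain ` cochain_box m dM dN)" .
qed

abbreviation rad_cocycles :: "nat list \<Rightarrow> 'k::field cochain set" where
  "rad_cocycles c \<equiv> ext_cocycles c (rad_dim c) (rad_map c) (rad_dim c) (rad_map c)"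

abbreviation rad_coboundaries :: "nat list \<Rightarrow> 'k::field cochain set" where
  "rad_coboundaries c \<equiv> ext_coboundaries c (rad_dim c) (rad_map c) (rad_dim c) (rad_map c)"

lemma mem_rad_coboundaries_iff:
  "f \<in> rad_coboundaries c \<longleftrightarrow>
    (\<exists>g. (\<forall>j r s. g j r s \<noteq> 0 \<longrightarrow> j < length c \<and> r < rad_dim c j \<and> s < rad_dim c j) \<and> f = coboundary c g)"
  unfolding ext_coboundaries_def coboundary_def by auto

lemma coboundary_in_cochains1: "coboundary c g \<in> cochains1 (length c) (rad_dim c) (rad_dim c)"
  unfolding cochains1_def coboundary_def by auto

context kupisch_series
begin

lemma ext_pairsD:
  assumes "(i', i) \<in> ext_pairs c"
  shows "i < i'" "i' < proj_end c i" "proj_end c i < proj_end c i'" "proj_end c (Suc i) = proj_end c i'"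
    "i < n" "Suc i < proj_end c i" "proj_end c i' \<le> Suc n"
  using assms length_eq Suc_less_proj_end[of i] proj_end_le[of i'] by (auto simp: ext_pairs_def)

lemma mem_rad_cocycles_iff:
  "f \<in> rad_cocycles c \<longleftrightarrow> f \<in> cochains1 (length c) (rad_dim c) (rad_dim c) \<and> chain_sums_vanish c f"
  unfolding ext_cocycles_def using is_module_ext_map_iff by blast

lemma chain_sums_vanish_coboundary: "chain_sums_vanish c (coboundary c g)"
  unfolding chain_sums_vanish_def
proof (intro allI impI)
  fix k i i'
  assume w: "proj_end c k < length c \<and> i < k \<and> k < proj_end c i \<and> i' < proj_end c k \<and> proj_end c k < proj_end c i'"
  then have "k \<le> i'" "proj_end c i \<le> proj_end c k"
    using relation_window[of k i i'] le_proj_end[of k c] length_eq by auto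
  moreover have "proj_end c i' \<le> length c"
    using proj_end_le[of i'] w length_eq by auto
  ultimately show "chain_sum c (coboundary c g) i' i = 0"
    using chain_sum_coboundary[of i i' c g] w by auto
qed

lemma rad_coboundaries_subset_cocycles: "rad_coboundaries c \<subseteq> rad_cocycles c"
proof
  fix f :: "'k::field cochain"
  assume "f \<in> rad_coboundaries c"
  then obtain g where "f = coboundary c g"
    using mem_rad_coboundaries_iff by blast
  then show "f \<in> rad_cocycles c"
    by (simp add: mem_rad_cocycles_iff coboundary_in_cochains1 chain_sums_vanish_coboundary)
qed

lemma chain_entry_ext_witness:
  assumes q: "(i', i) \<in> ext_pairs c"
    and t: "i0' \<le> t" "Suc t < proj_end c i0'" "i0 < t" "t < proj_end c i0"
  shows "chain_entry c (ext_witness c (i', i) :: 'k::field cochain) t i0' i0 =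
    (if (i', i) = (i0', i0) \<and> t = proj_end c i0 - 1 then 1 else 0)"
proof -
  note q = ext_pairsD[OF q]
  have "rad_pos c (Suc t) i0' = rad_pos c (Suc t) i' \<Longrightarrow> Suc t = proj_end c i \<Longrightarrow> i0' = i'"
    using rad_pos_inj[of i0' "Suc t" c i'] q t by auto
  moreover have "rad_pos c t i0 = rad_pos c t i \<Longrightarrow> Suc t = proj_end c i \<Longrightarrow> i0 = i"
    using rad_pos_inj[of i0 t c i] q t by auto
  ultimately show ?thesis
    using q by (auto simp: chain_entry_def ext_witness_def)
qed

lemma chain_sum_ext_witness:
  assumes q: "(i', i) \<in> ext_pairs c" and w: "i0 < i0'" "proj_end c i0 < proj_end c i0'"
  shows "chain_sum c (ext_witness c (i', i) :: 'k::field cochain) i0' i0 = (if (i', i) = (i0', i0) then 1 else 0)"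
proof (cases "i0' < proj_end c i0")
  case True
  have "chain_sum c (ext_witness c (i', i) :: 'k cochain) i0' i0
      = (\<Sum>t\<in>{i0'..<proj_end c i0}. if t = proj_end c i0 - 1 then (if (i', i) = (i0', i0) then 1 else 0) else 0)"
    unfolding chain_sum_def using w by (intro sum.cong) (auto simp: chain_entry_ext_witness[OF q])
  also have "\<dots> = (if (i', i) = (i0', i0) then 1 else 0)"
  proof -
    have "proj_end c i0 - 1 \<in> {i0'..<proj_end c i0}" using True by auto
    then show ?thesis by (simp add: sum.delta')
  qed
  finally show ?thesis .
next
  case False
  then show ?thesis using ext_pairsD(2)[OF q] by (auto simp: chain_sum_def)
qed

lemma ext_witness_in_cocycles:
  assumes q: "q \<in> ext_pairs c"
  shows "(ext_witness c q :: 'k::field cochain) \<in> rad_cocycles c"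
proof -
  obtain i' i where qq: "q = (i', i)" by (cases q)
  note q' = ext_pairsD[OF q[unfolded qq]]
  have "Suc (proj_end c i - 1) = proj_end c i" using q' by auto
  then have "ext_witness c q \<in> cochains1 (length c) (rad_dim c) (rad_dim c)"
    using nth_rad_pos[of i' "proj_end c i" c] nth_rad_pos[of i "proj_end c i - 1" c] q' length_eq
    unfolding cochains1_def ext_witness_def qq by (auto simp: less_rad_dim_iff)
  moreover have "chain_sums_vanish c (ext_witness c q :: 'k cochain)"
    unfolding chain_sums_vanish_def
  proof (intro allI impI)
    fix k i0 i0'
    assume w: "proj_end c k < length c \<and> i0 < k \<and> k < proj_end c i0 \<and> i0' < proj_end c k \<and>
      proj_end c k < proj_end c i0'"
    then have "k \<le> i0'" "proj_end c i0 \<le> proj_end c k" "proj_end c (Suc i0) \<le> proj_end c k"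
      using relation_window[of k i0 i0'] proj_end_mono[of "Suc i0" k] le_proj_end[of k c] length_eq by auto
    moreover have "(i', i) \<noteq> (i0', i0)"
      using q' w \<open>proj_end c (Suc i0) \<le> proj_end c k\<close> by auto
    ultimately show "chain_sum c (ext_witness c q :: 'k cochain) i0' i0 = 0"
      using chain_sum_ext_witness[OF q[unfolded qq], of i0 i0'] w qq by auto
  qed
  ultimately show ?thesis using mem_rad_cocycles_iff by blast
qed

lemma chain_sum_vanishes_if_ext_pairs:
  assumes vanish: "chain_sums_vanish c h" and pairs: "\<And>i' i. (i', i) \<in> ext_pairs c \<Longrightarrow> chain_sum c h i' i = 0"
    and w: "i < i'" "i' < proj_end c i" "proj_end c i < proj_end c i'" "i' \<le> n"
  shows "chain_sum c h i' i = 0"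
proof (cases "proj_end c (Suc i) = proj_end c i'")
  case True
  then show ?thesis using pairs w length_eq by (simp add: ext_pairs_def)
next
  case False
  have "i < n" using w by simp
  then have "proj_end c (Suc i) < proj_end c i'" "proj_end c i \<le> proj_end c (Suc i)" "Suc i < proj_end c i"
    using False proj_end_mono[of "Suc i" i'] proj_end_mono[of i "Suc i"] Suc_less_proj_end w by auto
  moreover have "proj_end c i' \<le> length c" using proj_end_le w length_eq by simp
  ultimately have "proj_end c (Suc i) < length c \<and> i < Suc i \<and> Suc i < proj_end c i \<and>
      i' < proj_end c (Suc i) \<and> proj_end c (Suc i) < proj_end c i'"
    using w by linarith
  then show ?thesis
    using vanish unfolding chain_sums_vanish_def by blast
qed

lemma coboundary_primitive_cochain:
  fixes h :: "'k::field cochain"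
  assumes h: "h \<in> cochains1 (length c) (rad_dim c) (rad_dim c)" and vanish: "chain_sums_vanish c h"
    and pairs: "\<And>i' i. (i', i) \<in> ext_pairs c \<Longrightarrow> chain_sum c h i' i = 0"
  shows "coboundary c (primitive_cochain c h) = h"
proof (intro ext)
  fix t r s
  show "coboundary c (primitive_cochain c h) t r s = h t r s"
  proof (cases "Suc t < length c \<and> r < rad_dim c (Suc t) \<and> s < rad_dim c t")
    case True
    then have r: "r < length (rad_idx c (Suc t))" and s: "s < length (rad_idx c t)"
      by (auto simp: less_rad_dim_iff)
    define i' i where "i' = rad_idx c (Suc t) ! r" and "i = rad_idx c t ! s"
    have pos: "rad_pos c (Suc t) i' = r" "rad_pos c t i = s"
      using rad_pos_nth[OF r] rad_pos_nth[OF s] by (simp_all add: i'_def i_def)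
    have t: "i' \<le> t" "Suc t < proj_end c i'" "i < t" "t < proj_end c i" "Suc t < length c"
      using nth_rad_idx[OF r] nth_rad_idx[OF s] True by (auto simp: i'_def i_def)
    have "coboundary c (primitive_cochain c h) t r s
        = chain_entry c (coboundary c (primitive_cochain c h)) t i' i"
      by (simp add: chain_entry_def pos)
    also have "\<dots> = (if i' < t then chain_primitive c h t i' i else 0)
        - (if Suc t < proj_end c i then chain_primitive c h (Suc t) i' i else 0)"
      using t by (simp add: chain_entry_coboundary primitive_cochain_rad_pos)
    also have "\<dots> = chain_entry c h t i' i"
    proof (rule chain_entry_eq_primitive_diff[symmetric, OF t(1-4)])
      assume "i < i'" "i' < proj_end c i" "proj_end c i < proj_end c i'"
      moreover have "i' \<le> n" using t length_eq by simp
      ultimately show "chain_sum c h i' i = 0"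
        using chain_sum_vanishes_if_ext_pairs[OF vanish pairs] by blast
    qed
    also have "\<dots> = h t r s"
      by (simp add: chain_entry_def pos)
    finally show ?thesis .
  next
    case False
    then show ?thesis using h by (auto simp: coboundary_def cochains1_def)
  qed
qed

lemma primitive_cochain_in_rad_coboundaries:
  fixes h :: "'k::field cochain"
  assumes "h \<in> rad_cocycles c" and "\<And>i' i. (i', i) \<in> ext_pairs c \<Longrightarrow> chain_sum c h i' i = 0"
  shows "h \<in> rad_coboundaries c"
proof -
  have "coboundary c (primitive_cochain c h) = h"
    using assms mem_rad_cocycles_iff[of h] coboundary_primitive_cochain by blast
  then show ?thesis
    unfolding mem_rad_coboundaries_iff
    by (intro exI[of _ "primitive_cochain c h"]) (auto simp: primitive_cochain_def)
qed

lemma subspace_rad_cocycles: "cochain_space.subspace (rad_cocycles c :: 'k::field cochain set)"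
proof -
  note C = subspace_cochains1[of "length c" "rad_dim c" "rad_dim c"]
  show ?thesis
    unfolding cochain_space.subspace_def
  proof (intro conjI ballI allI)
    show "0 \<in> rad_cocycles c"
      using cochain_space.subspace_0[OF C] by (simp add: mem_rad_cocycles_iff chain_sums_vanish_def)
  next
    fix x y :: "'k cochain"
    assume "x \<in> rad_cocycles c" "y \<in> rad_cocycles c"
    then show "x + y \<in> rad_cocycles c"
      using cochain_space.subspace_add[OF C]
      by (auto simp: mem_rad_cocycles_iff chain_sums_vanish_def chain_sum_add)
  next
    fix a :: 'k and x :: "'k cochain"
    assume "x \<in> rad_cocycles c"
    then show "cscale a x \<in> rad_cocycles c"
      using cochain_space.subspace_scale[OF C]
      by (auto simp: mem_rad_cocycles_iff chain_sums_vanish_def chain_sum_cscale)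
  qed
qed

lemma rad_cocycles_subset_span:
  "rad_cocycles c \<subseteq> cochain_space.span (rad_coboundaries c \<union> ext_witness c ` ext_pairs c :: 'k::field cochain set)"
proof
  fix x :: "'k cochain"
  assume x: "x \<in> rad_cocycles c"
  define w where "w = (\<Sum>q\<in>ext_pairs c. cscale (chain_sum c x (fst q) (snd q)) (ext_witness c q :: 'k cochain))"
  have "w \<in> rad_cocycles c"
    unfolding w_def using ext_witness_in_cocycles
    by (intro cochain_space.subspace_sum[OF subspace_rad_cocycles]
        cochain_space.subspace_scale[OF subspace_rad_cocycles]) auto
  then have "x - w \<in> rad_cocycles c"
    using cochain_space.subspace_diff[OF subspace_rad_cocycles] x by blast
  moreover have "chain_sum c (x - w) i' i = 0" if q: "(i', i) \<in> ext_pairs c" for i' i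
  proof -
    have "chain_sum c w i' i =
        (\<Sum>q\<in>ext_pairs c. chain_sum c x (fst q) (snd q) * chain_sum c (ext_witness c q) i' i)"
      unfolding w_def by (simp add: chain_sum_sum chain_sum_cscale)
    also have "\<dots> = (\<Sum>q\<in>ext_pairs c. if q = (i', i) then chain_sum c x (fst q) (snd q) else 0)"
    proof (rule sum.cong[OF refl])
      fix q
      assume "q \<in> ext_pairs c"
      moreover obtain a b where "q = (a, b)" by (cases q)
      ultimately show "chain_sum c x (fst q) (snd q) * chain_sum c (ext_witness c q) i' i =
          (if q = (i', i) then chain_sum c x (fst q) (snd q) else 0)"
        using chain_sum_ext_witness[of a b i i'] ext_pairsD[OF q] by auto
    qed
    also have "\<dots> = chain_sum c x i' i"
      using q finite_ext_pairs by (simp add: sum.delta')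
    finally show ?thesis by (simp add: chain_sum_diff)
  qed
  ultimately have "x - w \<in> rad_coboundaries c"
    by (rule primitive_cochain_in_rad_coboundaries)
  then have "x - w \<in> cochain_space.span (rad_coboundaries c \<union> ext_witness c ` ext_pairs c)"
    by (intro cochain_space.span_base) simp
  moreover have "w \<in> cochain_space.span (rad_coboundaries c \<union> ext_witness c ` ext_pairs c)"
    unfolding w_def by (intro cochain_space.span_sum cochain_space.span_scale cochain_space.span_base) auto
  ultimately have "(x - w) + w \<in> cochain_space.span (rad_coboundaries c \<union> ext_witness c ` ext_pairs c)"
    by (rule cochain_space.span_add)
  then show "x \<in> cochain_space.span (rad_coboundaries c \<union> ext_witness c ` ext_pairs c)" by simp
qed

lemma dim_rad_cocycles:
  "cochain_space.dim (rad_cocycles c :: 'k::field cochain set)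
     = cochain_space.dim (rad_coboundaries c :: 'k cochain set) + card (ext_pairs c)"
proof (rule cochain_space.dim_eq_dim_add_card_dual[where Q = "ext_pairs c" and w = "ext_witness c"
      and \<sigma> = "\<lambda>q f. chain_sum c f (fst q) (snd q)"])
  show "rad_coboundaries c \<subseteq> rad_cocycles c"
    by (rule rad_coboundaries_subset_cocycles)
  show "rad_cocycles c \<subseteq> cochain_space.span (unit_cochain ` cochain_box (length c) (rad_dim c) (rad_dim c))"
    using cochains1_subset_span mem_rad_cocycles_iff by blast
  show "finite (unit_cochain ` cochain_box (length c) (rad_dim c) (rad_dim c))"
    using finite_cochain_box by blast
  show "finite (ext_pairs c)"
    by (rule finite_ext_pairs)
  show "ext_witness c ` ext_pairs c \<subseteq> rad_cocycles c"
    using ext_witness_in_cocycles by blast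
  show "rad_cocycles c \<subseteq> cochain_space.span (rad_coboundaries c \<union> ext_witness c ` ext_pairs c)"
    by (rule rad_cocycles_subset_span)
  show "\<And>q x y. chain_sum c (x + y) (fst q) (snd q) = chain_sum c x (fst q) (snd q) + chain_sum c y (fst q) (snd q)"
    by (rule chain_sum_add)
  show "\<And>q a x. chain_sum c (cscale a x) (fst q) (snd q) = a * chain_sum c x (fst q) (snd q)"
    by (rule chain_sum_cscale)
  show "chain_sum c x (fst q) (snd q) = 0" if Q: "q \<in> ext_pairs c" and B: "x \<in> rad_coboundaries c" for q x
  proof -
    obtain i' i where q: "q = (i', i)" by (cases q)
    obtain g where "x = coboundary c g" using B mem_rad_coboundaries_iff by blast
    then show ?thesis
      using chain_sum_coboundary[of i i' c g] ext_pairsD[OF Q[unfolded q]] length_eq q by simp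
  qed
  show "chain_sum c (ext_witness c q') (fst q) (snd q) = (if q = q' then 1 else 0)"
    if "q \<in> ext_pairs c" "q' \<in> ext_pairs c" for q q'
  proof -
    obtain i' i where q: "q = (i', i)" by (cases q)
    obtain a b where q': "q' = (a, b)" by (cases q')
    show ?thesis
      using chain_sum_ext_witness[of a b i i'] that ext_pairsD[OF that(1)[unfolded q]] q q' by auto
  qed
qed

lemma ext1_dim_rad: "ext1_dim c (rad_dim c) (rad_map c :: nat \<Rightarrow> nat \<Rightarrow> nat \<Rightarrow> 'k::field) (rad_dim c) (rad_map c)
    = card (ext_pairs c)"
  unfolding ext1_dim_def by (simp add: dim_rad_cocycles)

end

definition ext_vertices :: "nat list \<Rightarrow> nat set" where
  "ext_vertices c = {j. j < length c \<and> (\<exists>i<j. j < proj_end c i \<and> Suc i < length c \<and> c ! i \<le> c ! Suc i)}"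

context kupisch_series
begin

lemma inj_on_fst_ext_pairs: "inj_on fst (ext_pairs c)"
proof (rule inj_onI)
  fix x y
  assume x: "x \<in> ext_pairs c" and y: "y \<in> ext_pairs c" and eq: "fst x = fst y"
  obtain i' i1 i2 where xy: "x = (i', i1)" "y = (i', i2)"
    using eq by (cases x, cases y) auto
  have "\<not> i1 < i2" "\<not> i2 < i1"
    using ext_pairsD[OF x[unfolded xy(1)]] ext_pairsD[OF y[unfolded xy(2)]]
      proj_end_mono[of "Suc i1" i2] proj_end_mono[of "Suc i2" i1] by auto
  then show "x = y" using xy by simp
qed

lemma fst_ext_pairs: "fst ` ext_pairs c = ext_vertices c"
proof (intro set_eqI iffI)
  fix j
  assume "j \<in> fst ` ext_pairs c"
  then obtain i where q: "(j, i) \<in> ext_pairs c" by force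
  then have "c ! i \<le> c ! Suc i"
    using ext_pairsD[OF q] by (simp add: proj_end_def)
  then show "j \<in> ext_vertices c"
    using ext_pairsD[OF q] length_eq unfolding ext_vertices_def by auto
next
  fix j
  assume "j \<in> ext_vertices c"
  then obtain i0 where j: "j < Suc n" and i0: "i0 < j" "j < proj_end c i0" "Suc i0 < Suc n" "c ! i0 \<le> c ! Suc i0"
    unfolding ext_vertices_def using length_eq by auto
  define K where "K = {k. k < j \<and> proj_end c k < proj_end c j}"
  define i where "i = Max K"
  have "proj_end c i0 < proj_end c (Suc i0)" "proj_end c (Suc i0) \<le> proj_end c j"
    using i0 j proj_end_mono[of "Suc i0" j] by (auto simp: proj_end_def)
  then have "i0 \<in> K" using i0 by (simp add: K_def)
  moreover have "finite K" by (simp add: K_def)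
  ultimately have "i \<in> K" "i0 \<le> i" unfolding i_def by (auto intro: Max_in Max_ge)
  then have i: "i < j" "proj_end c i < proj_end c j" "j < proj_end c i"
    using proj_end_mono[of i0 i] i0 j by (auto simp: K_def)
  have "proj_end c (Suc i) = proj_end c j"
  proof (rule ccontr)
    assume "proj_end c (Suc i) \<noteq> proj_end c j"
    then have "Suc i \<in> K"
      using proj_end_mono[of "Suc i" j] i j by (cases "Suc i = j") (auto simp: K_def)
    then show False using Max_ge[OF \<open>finite K\<close>, of "Suc i"] i_def by simp
  qed
  then have "(j, i) \<in> ext_pairs c" unfolding ext_pairs_def using i j length_eq by auto
  then show "j \<in> fst ` ext_pairs c" by force
qed

lemma card_ext_pairs: "card (ext_pairs c) = card (ext_vertices c)"
  using card_image[OF inj_on_fst_ext_pairs] fst_ext_pairs by simp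

end

section \<open>The Dyck path and the Billey--Jockusch--Stanley permutation\<close>

lemma card_preimage_initial:
  assumes \<pi>: "\<pi> permutes {1..n}" and i: "i \<le> n"
  shows "card {y \<in> {1..n}. \<pi> y \<le> i} = i"
proof -
  have "{y \<in> {1..n}. \<pi> y \<le> i} = inv \<pi> ` {1..i}"
  proof (intro set_eqI iffI)
    fix y
    assume "y \<in> {y \<in> {1..n}. \<pi> y \<le> i}"
    then show "y \<in> inv \<pi> ` {1..i}"
      using permutes_in_image[OF \<pi>, of y] permutes_inverses(2)[OF \<pi>, of y]
      by (intro image_eqI[of _ _ "\<pi> y"]) auto
  next
    fix y
    assume "y \<in> inv \<pi> ` {1..i}"
    then obtain v where v: "v \<in> {1..i}" "y = inv \<pi> v" by blast
    then have "y \<in> {1..n}"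
      using permutes_in_image[OF permutes_inv[OF \<pi>], of v] i by auto
    moreover have "\<pi> y = v" using v permutes_inverses(1)[OF \<pi>] by simp
    ultimately show "y \<in> {y \<in> {1..n}. \<pi> y \<le> i}" using v by auto
  qed
  moreover have "inj_on (inv \<pi>) {1..i}"
    using permutes_inj[OF permutes_inv[OF \<pi>]] by (rule inj_on_subset) simp
  ultimately show ?thesis by (simp add: card_image)
qed

lemma permutes_initial_subset_if_uncovered:
  fixes \<pi> :: "nat \<Rightarrow> nat"
  assumes \<pi>: "\<pi> permutes {1..n}" and V: "\<And>d a. (d, a) \<in> V \<Longrightarrow> 1 \<le> d \<and> d \<le> a \<and> \<pi> d = a + 1"
    and mono: "strict_mono_on ({1..n} - fst ` V) \<pi>" and i: "i \<le> n"
    and uncovered: "\<not> (\<exists>(d, a)\<in>V. d \<le> i \<and> i \<le> a)"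
  shows "\<pi> ` {1..i} \<subseteq> {1..i}"
proof (rule image_subsetI, rule ccontr)
  fix x
  assume x: "x \<in> {1..i}" and "\<pi> x \<notin> {1..i}"
  moreover have "\<pi> x \<in> {1..n}" using permutes_in_image[OF \<pi>, of x] x i by auto
  ultimately have big: "i < \<pi> x" by auto
  have x_unmarked: "x \<notin> fst ` V"
    using V big uncovered x by fastforce
  define Y where "Y = {y \<in> {1..n}. \<pi> y \<le> i}"
  have "Y \<subseteq> {1..i} - {x}"
  proof
    fix y
    assume y: "y \<in> Y"
    then have yn: "y \<in> {1..n}" "\<pi> y \<le> i" by (auto simp: Y_def)
    have "y \<le> i"
    proof (cases "y \<in> fst ` V")
      case True
      then show ?thesis using V yn by force
    next
      case False
      then have "\<not> x < y"
        using strict_mono_onD[OF mono, of x y] x_unmarked x yn big i by auto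
      then show ?thesis using x by auto
    qed
    then show "y \<in> {1..i} - {x}" using yn big by auto
  qed
  then have "card Y \<le> i - 1"
    using card_mono[of "{1..i} - {x}" Y] x by auto
  moreover have "card Y = i"
    unfolding Y_def by (rule card_preimage_initial[OF \<pi> i])
  ultimately show False using x by auto
qed

lemma permutes_moves_initial_iff:
  fixes \<pi> :: "nat \<Rightarrow> nat"
  assumes \<pi>: "\<pi> permutes {1..n}" and V: "\<And>d a. (d, a) \<in> V \<Longrightarrow> 1 \<le> d \<and> d \<le> a \<and> \<pi> d = a + 1"
    and mono: "strict_mono_on ({1..n} - fst ` V) \<pi>" and i: "i \<le> n"
  shows "\<pi> ` {1..i} \<noteq> {1..i} \<longleftrightarrow> (\<exists>(d, a)\<in>V. d \<le> i \<and> i \<le> a)"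
proof
  assume "\<exists>(d, a)\<in>V. d \<le> i \<and> i \<le> a"
  then obtain d a where "(d, a) \<in> V" "d \<le> i" "i \<le> a" by auto
  then have "d \<in> {1..i}" "\<pi> d \<notin> {1..i}" using V by auto
  then show "\<pi> ` {1..i} \<noteq> {1..i}" by blast
next
  assume "\<pi> ` {1..i} \<noteq> {1..i}"
  moreover have "\<pi> ` {1..i} = {1..i}" if "\<not> (\<exists>(d, a)\<in>V. d \<le> i \<and> i \<le> a)"
    using permutes_initial_subset_if_uncovered[OF \<pi> V mono i that]
    by (intro endo_inj_surj) (auto intro: inj_on_subset[OF permutes_inj[OF \<pi>]])
  ultimately show "\<exists>(d, a)\<in>V. d \<le> i \<and> i \<le> a" by blast
qed

definition bjs_marks :: "bool list \<Rightarrow> (nat \<times> nat) set" where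
  "bjs_marks w = (\<lambda>p. (downs_before w p, ups_before w p)) ` valleys w"

lemma bjs_perm_marks:
  assumes "bjs_perm n w \<pi>"
  shows "\<pi> permutes {1..n}" "\<And>d a. (d, a) \<in> bjs_marks w \<Longrightarrow> \<pi> d = a + 1"
    "strict_mono_on ({1..n} - fst ` bjs_marks w) \<pi>"
  using assms by (auto simp: bjs_perm_def bjs_marks_def image_image)

text \<open>The up-steps of the Dyck path of c are at the positions 2n - up_step_code c i, i < n.\<close>

definition up_step_code :: "nat list \<Rightarrow> nat \<Rightarrow> nat" where
  "up_step_code c i = 2 * i + c ! i"

context kupisch_series
begin

lemma up_step_code_strict_mono: "i < j \<Longrightarrow> j \<le> n \<Longrightarrow> up_step_code c i < up_step_code c j"
proof (induction j)
  case 0 then show ?case by simp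
next
  case (Suc j)
  have "up_step_code c j < up_step_code c (Suc j)" using kupisch_step[of j] Suc(3) by (auto simp: up_step_code_def)
  then show ?case using Suc by (cases "i = j") auto
qed

lemma up_step_code_mono: "i \<le> j \<Longrightarrow> j \<le> n \<Longrightarrow> up_step_code c i \<le> up_step_code c j"
  using up_step_code_strict_mono[of i j] by (cases "i = j") auto

lemma up_step_code_less_iff: "i \<le> n \<Longrightarrow> j \<le> n \<Longrightarrow> up_step_code c i < up_step_code c j \<longleftrightarrow> i < j"
  using up_step_code_strict_mono[of i j] up_step_code_strict_mono[of j i] by (cases i j rule: linorder_cases) auto

lemma up_step_code_eq_iff: "i \<le> n \<Longrightarrow> j \<le> n \<Longrightarrow> up_step_code c i = up_step_code c j \<longleftrightarrow> i = j"
  using up_step_code_strict_mono[of i j] up_step_code_strict_mono[of j i] by (cases i j rule: linorder_cases) auto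

lemma up_step_code_last: "up_step_code c n = 2 * n + 1"
  using kupisch_last by (simp add: up_step_code_def)

lemma kupisch_penultimate: "1 \<le> n \<Longrightarrow> c ! (n - 1) = 2"
  using kupisch_ge2[of "n-1"] kupisch_step[of "n-1"] kupisch_last by auto

lemma up_step_code_penultimate: "1 \<le> n \<Longrightarrow> up_step_code c (n - 1) = 2 * n"
  using kupisch_penultimate by (simp add: up_step_code_def)

lemma up_step_code_le: "1 \<le> n \<Longrightarrow> i < n \<Longrightarrow> up_step_code c i \<le> 2 * n"
proof (cases "i < n - 1")
  case True
  then show ?thesis using up_step_code_strict_mono[of i "n-1"] up_step_code_penultimate by auto
next
  case False
  assume "1 \<le> n" "i < n"
  with False have "i = n - 1" by auto
  then show ?thesis using up_step_code_penultimate \<open>1 \<le> n\<close> by simp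
qed

lemma double_le_up_step_code_pred:
  assumes "0 < i" "i \<le> n"
  shows "2 * i \<le> up_step_code c (i - 1)"
proof -
  have "2 \<le> c ! (i - 1)" using assms by (intro kupisch_ge2) simp
  with assms(1) show ?thesis by (cases i) (auto simp: up_step_code_def)
qed

lemma dyck_height_eq:
  assumes x: "x \<le> 2 * n" and i: "i \<le> n" and lt: "2 * n - x < up_step_code c i"
    and ge: "i = 0 \<or> up_step_code c (i - 1) \<le> 2 * n - x"
  shows "dyck_height c x = 2 * n - x - 2 * i"
proof -
  let ?y = "2 * n - x"
  have two: "2 * i \<le> ?y"
    using ge double_le_up_step_code_pred[of i] i by (cases "i = 0") auto
  define S where "S = {k - 1 | i k. i \<le> n \<and> 1 \<le> k \<and> k \<le> c ! i \<and> 2 * i + k - 1 = 2 * n - x}"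
  have dh: "dyck_height c x = Max S" unfolding dyck_height_def S_def using length_eq by simp
  have mem: "?y - 2 * i \<in> S"
    unfolding S_def using two lt i
    by (intro CollectI exI[of _ i] exI[of _ "?y - 2 * i + 1"]) (auto simp: up_step_code_def)
  have bound: "e \<le> ?y - 2 * i" if "e \<in> S" for e
  proof -
    from that obtain i' k where ik: "e = k - 1" "i' \<le> n" "1 \<le> k" "k \<le> c ! i'" "2 * i' + k - 1 = ?y"
      unfolding S_def by blast
    have "?y < up_step_code c i'" using ik by (auto simp: up_step_code_def)
    have "i \<le> i'"
    proof (rule ccontr)
      assume "\<not> i \<le> i'"
      then have "i' \<le> i - 1" "i \<noteq> 0" by auto
      then have "up_step_code c i' \<le> up_step_code c (i - 1)"
        using up_step_code_mono[of i' "i - 1"] i by auto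
      then show False using ge \<open>i \<noteq> 0\<close> \<open>?y < up_step_code c i'\<close> by auto
    qed
    then show ?thesis using ik by auto
  qed
  have fin: "finite S"
  proof (rule finite_subset[of _ "{..?y}"])
    show "S \<subseteq> {..?y}" unfolding S_def by auto
  qed simp
  show ?thesis unfolding dh by (rule Max_eqI[OF fin bound mem])
qed

lemma up_step_code_bracket:
  assumes "y \<le> 2 * n"
  shows "\<exists>i \<le> n. y < up_step_code c i \<and> (i = 0 \<or> up_step_code c (i - 1) \<le> y)"
proof -
  define i where "i = (LEAST i. y < up_step_code c i)"
  have ex: "y < up_step_code c n" using up_step_code_last assms by simp
  have "y < up_step_code c i" unfolding i_def by (rule LeastI[of _ n]) (rule ex)
  moreover have "i \<le> n" unfolding i_def by (rule Least_le) (rule ex)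
  moreover have "i = 0 \<or> up_step_code c (i - 1) \<le> y"
  proof (cases "i = 0")
    case False
    then have "\<not> y < up_step_code c (i - 1)" unfolding i_def by (intro not_less_Least) (auto simp: i_def)
    then show ?thesis by auto
  qed simp
  ultimately show ?thesis by blast
qed

lemma length_dyck_word: "length (dyck_word c) = 2 * n"
  using length_eq by (simp add: dyck_word_def)

lemma dyck_height_Suc_at_up_step:
  assumes x: "x < 2 * n" and i: "0 < i" "i \<le> n" and y: "up_step_code c (i - 1) = 2 * n - x"
  shows "dyck_height c x < dyck_height c (Suc x)"
proof -
  have "dyck_height c x = (2 * n - x) - 2 * i"
    using x i y up_step_code_strict_mono[of "i - 1" i] by (intro dyck_height_eq) auto
  moreover have "dyck_height c (Suc x) = (2 * n - Suc x) - 2 * (i - 1)"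
  proof (rule dyck_height_eq)
    show "i - 1 = 0 \<or> up_step_code c (i - 1 - 1) \<le> 2 * n - Suc x"
    proof (cases "i - 1 = 0")
      case False
      then have "up_step_code c (i - 1 - 1) < up_step_code c (i - 1)"
        using i by (intro up_step_code_strict_mono) auto
      then show ?thesis using x y by auto
    qed simp
  qed (use x i y in auto)
  moreover have "2 * i \<le> 2 * n - x"
    using double_le_up_step_code_pred[OF i] y by simp
  ultimately show ?thesis using i by (cases i) auto
qed

lemma dyck_height_Suc_inside:
  assumes x: "x < 2 * n" and i: "i \<le> n" "2 * n - x < up_step_code c i"
    and lt: "i = 0 \<or> up_step_code c (i - 1) < 2 * n - x"
  shows "\<not> dyck_height c x < dyck_height c (Suc x)"
proof -
  have "dyck_height c x = (2 * n - x) - 2 * i"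
    using x i lt by (intro dyck_height_eq) auto
  moreover have "dyck_height c (Suc x) = (2 * n - Suc x) - 2 * i"
    using x i lt by (intro dyck_height_eq) auto
  moreover have "2 * i < 2 * n - x"
    using lt x i double_le_up_step_code_pred[of i] by (cases "i = 0") auto
  ultimately show ?thesis by simp
qed

lemma dyck_word_nth:
  assumes x: "x < 2 * n"
  shows "dyck_word c ! x = (2 * n - x \<in> up_step_code c ` {..<n})"
proof -
  let ?y = "2 * n - x"
  have nth: "dyck_word c ! x = (dyck_height c x < dyck_height c (Suc x))"
    using x length_eq by (simp add: dyck_word_def)
  obtain i where i: "i \<le> n" "?y < up_step_code c i" "i = 0 \<or> up_step_code c (i - 1) \<le> ?y"
    using up_step_code_bracket[of ?y] by auto
  show ?thesis
  proof (cases "i \<noteq> 0 \<and> up_step_code c (i - 1) = ?y")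
    case True
    then have "?y \<in> up_step_code c ` {..<n}"
      using i by (auto intro!: image_eqI[of _ _ "i - 1"])
    then show ?thesis
      using nth dyck_height_Suc_at_up_step[OF x _ i(1)] True by simp
  next
    case False
    then have lt: "i = 0 \<or> up_step_code c (i - 1) < ?y" using i by auto
    have "?y \<notin> up_step_code c ` {..<n}"
    proof
      assume "?y \<in> up_step_code c ` {..<n}"
      then obtain i' where i': "i' < n" "up_step_code c i' = ?y" by auto
      then have "i' < i" using up_step_code_less_iff[of i' i] i by auto
      then have "up_step_code c i' \<le> up_step_code c (i - 1)"
        using i by (intro up_step_code_mono) auto
      then show False using lt i' \<open>i' < i\<close> by auto
    qed
    then show ?thesis
      using nth dyck_height_Suc_inside[OF x i(1,2) lt] by simp
  qed
qed

lemma ups_before_eq_card: "p \<le> 2 * n \<Longrightarrow> ups_before (dyck_word c) p = card {x. x < p \<and> dyck_word c ! x}"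
proof -
  assume p: "p \<le> 2 * n"
  have "ups_before (dyck_word c) p = card {i. i < length (take p (dyck_word c)) \<and> id (take p (dyck_word c) ! i)}"
    unfolding ups_before_def by (rule length_filter_conv_card)
  also have "\<dots> = card {x. x < p \<and> dyck_word c ! x}"
    using p length_dyck_word by (intro arg_cong[where f=card]) auto
  finally show ?thesis .
qed

lemma downs_before_eq: "p \<le> 2 * n \<Longrightarrow> downs_before (dyck_word c) p = p - ups_before (dyck_word c) p"
proof -
  assume p: "p \<le> 2 * n"
  have "length (filter id (take p (dyck_word c))) + length (filter Not (take p (dyck_word c))) = p"
    using sum_length_filter_compl[of id "take p (dyck_word c)"] p length_dyck_word by simp
  then show ?thesis unfolding ups_before_def downs_before_def by linarith
qed

lemma ups_before_valley:
  assumes n1: "1 \<le> n" and i: "i < n"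
  shows "ups_before (dyck_word c) (2 * n - up_step_code c i) = n - 1 - i"
proof -
  have Fi: "up_step_code c i \<le> 2 * n" using up_step_code_le[OF n1 i] .
  have eq: "{x. x < 2 * n - up_step_code c i \<and> dyck_word c ! x} = (\<lambda>i'. 2 * n - up_step_code c i') ` {i<..<n}"
  proof (intro set_eqI iffI)
    fix x assume "x \<in> {x. x < 2 * n - up_step_code c i \<and> dyck_word c ! x}"
    then have x: "x < 2 * n - up_step_code c i" "dyck_word c ! x" by auto
    then have "x < 2 * n" by auto
    with x dyck_word_nth obtain i' where i': "i' < n" "up_step_code c i' = 2 * n - x" by auto
    then have "up_step_code c i < up_step_code c i'" using x by auto
    then have "i < i'" using up_step_code_less_iff[of i i'] i i' by auto
    then show "x \<in> (\<lambda>i'. 2 * n - up_step_code c i') ` {i<..<n}" using i' x by (auto intro!: image_eqI[of _ _ i'])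
  next
    fix x assume "x \<in> (\<lambda>i'. 2 * n - up_step_code c i') ` {i<..<n}"
    then obtain i' where i': "i < i'" "i' < n" "x = 2 * n - up_step_code c i'" by auto
    have "up_step_code c i < up_step_code c i'" using up_step_code_strict_mono[of i i'] i' by auto
    moreover have "up_step_code c i' \<le> 2 * n" using up_step_code_le[OF n1 i'(2)] .
    moreover have "up_step_code c i' > 0" using kupisch_ge2[of i'] i' by (auto simp: up_step_code_def)
    ultimately have "x < 2 * n - up_step_code c i" "x < 2 * n" "2 * n - x = up_step_code c i'" using i' Fi by auto
    then show "x \<in> {x. x < 2 * n - up_step_code c i \<and> dyck_word c ! x}"
      using dyck_word_nth[of x] i' by auto
  qed
  have inj: "inj_on (\<lambda>i'. 2 * n - up_step_code c i') {i<..<n}"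
  proof (rule inj_onI)
    fix a b assume a: "a \<in> {i<..<n}" and b: "b \<in> {i<..<n}" and e: "2 * n - up_step_code c a = 2 * n - up_step_code c b"
    have "up_step_code c a \<le> 2 * n" "up_step_code c b \<le> 2 * n" using up_step_code_le[OF n1] a b by auto
    then have "up_step_code c a = up_step_code c b" using e by auto
    then show "a = b" using up_step_code_eq_iff[of a b] a b by auto
  qed
  show ?thesis using Fi
    by (simp add: ups_before_eq_card eq card_image[OF inj])
qed

lemma downs_before_valley:
  assumes n1: "1 \<le> n" and i: "i < n"
  shows "downs_before (dyck_word c) (2 * n - up_step_code c i) = Suc n - proj_end c i"
proof -
  have Fi: "up_step_code c i \<le> 2 * n" using up_step_code_le[OF n1 i] .
  have "proj_end c i \<le> Suc n" using proj_end_le[of i] i by auto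
  then show ?thesis using downs_before_eq[of "2 * n - up_step_code c i"] ups_before_valley[OF n1 i] Fi i
    by (simp add: up_step_code_def proj_end_def)
qed

lemma valleys_dyck_word:
  assumes n1: "1 \<le> n"
  shows "valleys (dyck_word c) = (\<lambda>i. 2 * n - up_step_code c i) ` {i. Suc i < n \<and> c ! i \<le> c ! Suc i}"
proof (intro set_eqI iffI)
  fix p assume "p \<in> valleys (dyck_word c)"
  then have p: "0 < p" "p < 2 * n" "\<not> dyck_word c ! (p - 1)" "dyck_word c ! p"
    unfolding valleys_def using length_dyck_word by auto
  obtain i where i: "i < n" "up_step_code c i = 2 * n - p" using dyck_word_nth[OF p(2)] p(4) by auto
  have "up_step_code c i < up_step_code c (n - 1)" using up_step_code_penultimate[OF n1] i p by auto
  then have i1: "Suc i < n" using up_step_code_less_iff[of i "n - 1"] i by auto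
  have nm: "2 * n - (p - 1) \<notin> up_step_code c ` {..<n}" using dyck_word_nth[of "p - 1"] p by auto
  have "c ! i \<le> c ! Suc i"
  proof (rule ccontr)
    assume "\<not> c ! i \<le> c ! Suc i"
    then have "c ! i = c ! Suc i + 1" using kupisch_step[of i] i by auto
    then have "up_step_code c (Suc i) = 2 * n - (p - 1)" using i p by (auto simp: up_step_code_def)
    then show False using nm i1 by (metis image_eqI lessThan_iff)
  qed
  then show "p \<in> (\<lambda>i. 2 * n - up_step_code c i) ` {i. Suc i < n \<and> c ! i \<le> c ! Suc i}"
    using i i1 p by (auto intro!: image_eqI[of _ _ i])
next
  fix p assume "p \<in> (\<lambda>i. 2 * n - up_step_code c i) ` {i. Suc i < n \<and> c ! i \<le> c ! Suc i}"
  then obtain i where i: "Suc i < n" "c ! i \<le> c ! Suc i" "p = 2 * n - up_step_code c i" by auto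
  have "up_step_code c i < up_step_code c (n - 1)" using up_step_code_strict_mono[of i "n - 1"] i by auto
  then have Flt: "up_step_code c i < 2 * n" using up_step_code_penultimate[OF n1] by simp
  have Fpos: "2 \<le> up_step_code c i" using kupisch_ge2[of i] i by (auto simp: up_step_code_def)
  have p0: "0 < p" "p < 2 * n" using Flt Fpos i by auto
  have "dyck_word c ! p" using dyck_word_nth[OF p0(2)] i Flt by auto
  moreover have "\<not> dyck_word c ! (p - 1)"
  proof
    assume "dyck_word c ! (p - 1)"
    then have "2 * n - (p - 1) \<in> up_step_code c ` {..<n}" using dyck_word_nth[of "p - 1"] p0 by auto
    then obtain i' where i': "i' < n" "up_step_code c i' = 2 * n - (p - 1)" by auto
    then have "up_step_code c i' = up_step_code c i + 1" using i Flt p0 by auto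
    then have "i < i'" using up_step_code_less_iff[of i i'] i i' by auto
    then have "up_step_code c (Suc i) \<le> up_step_code c i'" using up_step_code_mono[of "Suc i" i'] i' by auto
    moreover have "up_step_code c (Suc i) \<ge> up_step_code c i + 2" using i by (auto simp: up_step_code_def)
    ultimately show False using \<open>up_step_code c i' = up_step_code c i + 1\<close> by auto
  qed
  ultimately show "p \<in> valleys (dyck_word c)" unfolding valleys_def using p0 length_dyck_word by auto
qed


lemma ascent_less: "Suc k < length c \<Longrightarrow> c ! k \<le> c ! Suc k \<Longrightarrow> Suc k < n"
  using kupisch_ge2[of k] kupisch_last length_eq by (cases "Suc k = n") auto

lemma proj_end_le_of_ascent: "Suc k < n \<Longrightarrow> c ! k \<le> c ! Suc k \<Longrightarrow> proj_end c k \<le> n"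
  using proj_end_le[of "Suc k"] by (auto simp: proj_end_def)

lemma ext_vertices_iff:
  assumes i: "1 \<le> i" "i < n"
  shows "(\<exists>k. Suc k < n \<and> c ! k \<le> c ! Suc k \<and> Suc n - proj_end c k \<le> i \<and> i \<le> n - 1 - k)
     \<longleftrightarrow> n - i \<in> ext_vertices c"
proof
  assume "\<exists>k. Suc k < n \<and> c ! k \<le> c ! Suc k \<and> Suc n - proj_end c k \<le> i \<and> i \<le> n - 1 - k"
  then obtain k where k: "Suc k < n" "c ! k \<le> c ! Suc k" "Suc n - proj_end c k \<le> i" "i \<le> n - 1 - k" by blast
  have "proj_end c k \<le> n" using proj_end_le_of_ascent k by auto
  then show "n - i \<in> ext_vertices c" unfolding ext_vertices_def using k i length_eq
    by (auto intro!: exI[of _ k])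
next
  assume "n - i \<in> ext_vertices c"
  then obtain k where k: "k < n - i" "n - i < proj_end c k" "Suc k < length c" "c ! k \<le> c ! Suc k"
    unfolding ext_vertices_def by blast
  then have "Suc k < n" by (intro ascent_less)
  then show "\<exists>k. Suc k < n \<and> c ! k \<le> c ! Suc k \<and> Suc n - proj_end c k \<le> i \<and> i \<le> n - 1 - k"
    using k i by (intro exI[of _ k]) auto
qed

lemma ext_vertices_bounds:
  assumes "j \<in> ext_vertices c"
  shows "1 \<le> j" "j < n"
proof -
  obtain k where k: "k < j" "j < proj_end c k" "Suc k < length c" "c ! k \<le> c ! Suc k"
    using assms unfolding ext_vertices_def by blast
  then have "proj_end c k \<le> n" using proj_end_le_of_ascent ascent_less by blast
  then show "1 \<le> j" "j < n" using k by auto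
qed

lemma mem_bjs_marks_dyck_word_iff:
  assumes n1: "1 \<le> n"
  shows "(d, a) \<in> bjs_marks (dyck_word c) \<longleftrightarrow>
    (\<exists>k. Suc k < n \<and> c ! k \<le> c ! Suc k \<and> d = Suc n - proj_end c k \<and> a = n - 1 - k)"
  unfolding bjs_marks_def valleys_dyck_word[OF n1]
  using downs_before_valley[OF n1] ups_before_valley[OF n1]
  by (auto simp: image_image)

lemma bjs_marks_dyck_word_le:
  assumes "1 \<le> n" "(d, a) \<in> bjs_marks (dyck_word c)"
  shows "1 \<le> d \<and> d \<le> a"
proof -
  obtain k where k: "Suc k < n" "c ! k \<le> c ! Suc k" "d = Suc n - proj_end c k" "a = n - 1 - k"
    using mem_bjs_marks_dyck_word_iff assms by blast
  then show ?thesis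
    using proj_end_le_of_ascent[of k] kupisch_ge2[of k] by (auto simp: proj_end_def)
qed

lemma bjs_moves_initial_iff:
  assumes n1: "1 \<le> n" and bjs: "bjs_perm n (dyck_word c) \<pi>" and i: "1 \<le> i" "i < n"
  shows "\<pi> ` {1..i} \<noteq> {1..i} \<longleftrightarrow> n - i \<in> ext_vertices c"
proof -
  have "\<pi> ` {1..i} \<noteq> {1..i} \<longleftrightarrow> (\<exists>(d, a)\<in>bjs_marks (dyck_word c). d \<le> i \<and> i \<le> a)"
    using bjs_perm_marks[OF bjs] bjs_marks_dyck_word_le[OF n1] i
    by (intro permutes_moves_initial_iff) auto
  also have "\<dots> \<longleftrightarrow> (\<exists>k. Suc k < n \<and> c ! k \<le> c ! Suc k \<and> Suc n - proj_end c k \<le> i \<and> i \<le> n - 1 - k)"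
    using mem_bjs_marks_dyck_word_iff[OF n1] by fastforce
  also have "\<dots> \<longleftrightarrow> n - i \<in> ext_vertices c"
    by (rule ext_vertices_iff[OF i])
  finally show ?thesis .
qed

lemma initial_moved_set_eq:
  assumes n1: "1 \<le> n" and bjs: "bjs_perm n (dyck_word c) \<pi>"
  shows "{i \<in> {1..<n}. \<pi> ` {1..i} \<noteq> {1..i}} = (\<lambda>j. n - j) ` ext_vertices c"
proof (intro set_eqI iffI)
  fix i
  assume "i \<in> {i \<in> {1..<n}. \<pi> ` {1..i} \<noteq> {1..i}}"
  then have "n - i \<in> ext_vertices c" "i = n - (n - i)"
    using bjs_moves_initial_iff[OF n1 bjs] by auto
  then show "i \<in> (\<lambda>j. n - j) ` ext_vertices c" by blast
next
  fix i
  assume "i \<in> (\<lambda>j. n - j) ` ext_vertices c"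
  then obtain j where j: "j \<in> ext_vertices c" "i = n - j" by auto
  then have "1 \<le> i" "i < n" "n - i = j"
    using ext_vertices_bounds[OF j(1)] by auto
  then show "i \<in> {i \<in> {1..<n}. \<pi> ` {1..i} \<noteq> {1..i}}"
    using bjs_moves_initial_iff[OF n1 bjs, of i] j by auto
qed

lemma card_initial_moved_set:
  assumes n1: "1 \<le> n" and bjs: "bjs_perm n (dyck_word c) \<pi>"
  shows "card {i \<in> {1..<n}. \<pi> ` {1..i} \<noteq> {1..i}} = card (ext_vertices c)"
proof -
  have "inj_on (\<lambda>j. n - j) (ext_vertices c)"
    by (rule inj_onI) (auto simp: ext_vertices_def length_eq)
  then show ?thesis unfolding initial_moved_set_eq[OF n1 bjs] by (rule card_image)
qed

end

theorem mainTheorem2: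
  fixes n :: nat and \<pi> :: "nat \<Rightarrow> nat" and c :: "nat list"
  assumes "1 \<le> n"
    and "\<pi> permutes {1..n}"
    and "avoids_321 n \<pi>"
    and "kupisch c" and "length c = n + 1"
    and "bjs_perm n (dyck_word c) \<pi>"
  shows "ext1_dim c (rad_dim c) (rad_map c :: nat \<Rightarrow> nat \<Rightarrow> nat \<Rightarrow> 'k::field)
                    (rad_dim c) (rad_map c) = support_size n \<pi>"
proof -
  interpret kupisch_series c n
    using assms(4,5) by unfold_locales simp_all
  have "ext1_dim c (rad_dim c) (rad_map c :: nat \<Rightarrow> nat \<Rightarrow> nat \<Rightarrow> 'k) (rad_dim c) (rad_map c)
      = card (ext_pairs c)"
    by (rule ext1_dim_rad)
  also have "\<dots> = card (ext_vertices c)"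
    by (rule card_ext_pairs)
  also have "\<dots> = card {i \<in> {1..<n}. \<pi> ` {1..i} \<noteq> {1..i}}"
    using card_initial_moved_set[OF assms(1,6)] by simp
  also have "\<dots> = support_size n \<pi>"
    using support_size_eq_card[OF assms(2)] by simp
  finally show ?thesis .
qed

end
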